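(* Under the standing setup (with $f$ possibly unbounded), for every $u_0\in\mathbb R^d$ the function $u\colon[0,\infty)\to\mathbb R^d$, $u(t):=\mathscr S(t)u_0$, is the unique classical solution $u\in C^1([0,\infty);\mathbb R^d)$ of the initial value problem $u'(t)=\mathcal Qu(t)$ for $t\ge0$, $u(0)=u_0$. Moreover, the Nisio semigroup $\mathscr S$ is uniformly continuous, i.e. $\mathscr S(h)\to I$ uniformly on compact subsets of $\mathbb R^d$ as $h\searrow0$.
   Context: Standing setup: $d\in\mathbb N$; vectors in $\mathbb R^d$ with $\|u\|_\infty=\max_i|u_i|$; inequalities and suprema of vectors are componentwise; reals are identified with constant vectors. A $Q$-matrix is $q\in\mathbb R^{d\times d}$ with $q_{ii}\le0$, $q_{ij}\ge0$ ($i\ne j$), $\sum_jq_{ij}=0$. Let $\mathcal P$ be a set of $Q$-matrices and $f=(f_q)_{q\in\mathcal P}\subset\mathbb R^d$ with $\sup_{q\in\mathcal P}f_q=f_{q_0}=0$ for some $q_0\in\mathcal P$, such that $\mathcal Qu:=\sup_{q\in\mathcal P}(qu+f_q)$ is finite for every $u\in\mathbb R^d$. For $q\in\mathcal P$, $t\ge0$: $S_q(t)u_0:=e^{tq}u_0+\int_0^te^{sq}f_q\,ds$. For $h\ge0$: $\mathcal E_hu_0:=\sup_{q\in\mathcal P}S_q(h)u_0$. $P$ is the set of finite subsets $\pi\subset[0,\infty)$ with $0\in\pi$; $P_t:=\{\pi\in P:\max\pi=t\}$. For $\pi=\{t_0,\dots,t_m\}$ with $0=t_0<\dots<t_m$,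 $m\ge1$, $\mathcal E_\pi:=\mathcal E_{t_1-t_0}\circ\cdots\circ\mathcal E_{t_m-t_{m-1}}$, and $\mathcal E_{\{0\}}:=\mathcal E_0$. The Nisio semigroup of $(\mathcal P,f)$ is $\mathscr S(t)u_0:=\sup_{\pi\in P_t}\mathcal E_\pi u_0$. *)

theory Defs
  imports "HOL-Analysis.Analysis"
begin

text \<open>Dimension d is represented by a finite index type 'n (d = CARD('n)).
  Vectors are real^'n, d x d matrices are real^'n^'n.\<close>

definition is_Q_matrix :: "real^'n^'n \<Rightarrow> bool" where
  "is_Q_matrix q \<longleftrightarrow>
     (\<forall>i. q $ i $ i \<le> 0) \<and> (\<forall>i j. i \<noteq> j \<longrightarrow> q $ i $ j \<ge> 0) \<and>
     (\<forall>i. (\<Sum>j\<in>UNIV. q $ i $ j) = 0)"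

primrec mpow :: "real^'n^'n \<Rightarrow> nat \<Rightarrow> real^'n^'n" where
  "mpow A 0 = mat 1"
| "mpow A (Suc k) = A ** mpow A k"

definition mexp :: "real^'n^'n \<Rightarrow> real^'n^'n" where
  "mexp A = (\<Sum>k. (1 / fact k) *\<^sub>R mpow A k)"

definition vsup :: "'a set \<Rightarrow> ('a \<Rightarrow> real^'n) \<Rightarrow> real^'n" where
  "vsup A g = (\<chi> i. SUP a\<in>A. g a $ i)"

definition Sq :: "real^'n^'n \<Rightarrow> real^'n \<Rightarrow> real \<Rightarrow> real^'n \<Rightarrow> real^'n" where
  "Sq q fq t u0 = mexp (t *\<^sub>R q) *v u0 + integral {0..t} (\<lambda>s. mexp (s *\<^sub>R q) *v fq)"

definition Qop :: "(real^'n^'n) set \<Rightarrow> (real^'n^'n \<Rightarrow> real^'n) \<Rightarrow> real^'n \<Rightarrow> real^'n" where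
  "Qop P f u = vsup P (\<lambda>q. q *v u + f q)"

definition Eop :: "(real^'n^'n) set \<Rightarrow> (real^'n^'n \<Rightarrow> real^'n) \<Rightarrow> real \<Rightarrow> real^'n \<Rightarrow> real^'n" where
  "Eop P f h u0 = vsup P (\<lambda>q. Sq q (f q) h u0)"

definition partitions :: "real set set" where
  "partitions = {\<pi>. finite \<pi> \<and> \<pi> \<subseteq> {0..} \<and> 0 \<in> \<pi>}"

definition partitions_at :: "real \<Rightarrow> real set set" where
  "partitions_at t = {\<pi> \<in> partitions. Max \<pi> = t}"

fun Ecomp :: "(real^'n^'n) set \<Rightarrow> (real^'n^'n \<Rightarrow> real^'n) \<Rightarrow> real list \<Rightarrow> real^'n \<Rightarrow> real^'n" where
  "Ecomp P f [] = id"
| "Ecomp P f (h # hs) = Eop P f h \<circ> Ecomp P f hs"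

text \<open>For \<pi> = {t_0 < ... < t_m}, m \<ge> 1: E_\<pi> = E_{t_1-t_0} o ... o E_{t_m-t_{m-1}};
  E_{{0}} = E_0.\<close>
definition Epi :: "(real^'n^'n) set \<Rightarrow> (real^'n^'n \<Rightarrow> real^'n) \<Rightarrow> real set \<Rightarrow> real^'n \<Rightarrow> real^'n" where
  "Epi P f \<pi> = (if \<pi> = {0} then Eop P f 0
     else (let ts = sorted_list_of_set \<pi> in Ecomp P f (map2 (-) (tl ts) ts)))"

definition nisio :: "(real^'n^'n) set \<Rightarrow> (real^'n^'n \<Rightarrow> real^'n) \<Rightarrow> real \<Rightarrow> real^'n \<Rightarrow> real^'n" where
  "nisio P f t u0 = vsup (partitions_at t) (\<lambda>\<pi>. Epi P f \<pi> u0)"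

definition classical_solution :: "(real^'n \<Rightarrow> real^'n) \<Rightarrow> real^'n \<Rightarrow> (real \<Rightarrow> real^'n) \<Rightarrow> bool" where
  "classical_solution F u0 u \<longleftrightarrow>
     (\<exists>u'. (\<forall>t\<ge>0. (u has_vector_derivative u' t) (at t within {0..})) \<and>
           continuous_on {0..} u' \<and>
           (\<forall>t\<ge>0. u' t = F (u t))) \<and>
     u 0 = u0"

end

theory Submission
  imports Defs
begin

text \<open>
  Every \<open>S\<^sub>q\<close> is monotone, commutes with adding constants and keeps vectors below a constant
  \<open>c\<close> below \<open>c\<close>; all three facts follow from a comparison principle for \<open>z' \<ge> qz\<close> with \<open>q\<close>
  having nonnegative off-diagonal entries. The same principle shows that a classical solution \<open>v\<close>
  of \<open>u' = \<Q>u\<close> satisfies \<open>S\<^sub>q(h) v(r) \<le> v(r + h)\<close>, so by monotonicity \<open>E\<^sub>\<pi> v(0) \<le> v(t)\<close> for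
  every partition \<open>\<pi>\<close> of \<open>[0, t]\<close>, that is \<open>\<S>(t) v(0) \<le> v(t)\<close>. Conversely, a second-order
  Taylor bound for \<open>S\<^sub>q\<close>, with \<open>q\<close> chosen nearly optimal in \<open>\<Q>v(s)\<close> among finitely many
  candidates (by compactness), shows that one step of \<open>E\<^sub>h\<close> loses only \<open>o(h)\<close> against \<open>v\<close>; along
  fine uniform partitions this gives \<open>v(t) \<le> \<S>(t) v(0)\<close>. Hence every solution is the Nisio
  semigroup.

  A solution exists: \<open>\<Q>\<close> is a supremum of affine maps, hence convex and locally Lipschitz.
  Picard iteration solves the equation with the argument of \<open>\<Q>\<close> clamped to a box containing
  \<open>u\<^sub>0\<close>, and since \<open>(\<Q>u)\<^sub>i \<le> 0\<close> where \<open>u\<^sub>i\<close> is maximal and \<open>(\<Q>u)\<^sub>i \<ge> 0\<close> where it is minimal,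
  the solution never leaves the box. The resulting bound on the solution makes it Lipschitz in
  time, uniformly for initial values in a compact set.
\<close>

section \<open>Matrix exponential\<close>

lemma has_vector_derivative_vec_nth:
  assumes "(f has_vector_derivative d) F"
  shows "((\<lambda>x. f x $ i) has_real_derivative d $ i) F"
  using bounded_linear.has_vector_derivative[OF bounded_linear_vec_nth assms, of i]
  by (simp add: has_real_derivative_iff_has_vector_derivative)

lemma has_vector_derivative_componentwise:
  fixes f :: "real \<Rightarrow> real^'n"
  assumes "\<And>i. ((\<lambda>x. f x $ i) has_real_derivative d $ i) (at x within S)"
  shows "(f has_vector_derivative d) (at x within S)"
proof -
  have "((\<lambda>x. f x \<bullet> b) has_derivative (\<lambda>h. (h *\<^sub>R d) \<bullet> b)) (at x within S)" if "b \<in> Basis" for b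
  proof -
    obtain i where b: "b = axis i 1" using \<open>b \<in> Basis\<close> by (auto simp: Basis_vec_def)
    have "((\<lambda>x. f x $ i) has_derivative (\<lambda>h. h * d $ i)) (at x within S)"
      using assms[of i] by (simp add: has_field_derivative_def mult.commute[of _ "d $ i"])
    then show ?thesis by (simp add: b cart_eq_inner_axis[symmetric])
  qed
  then show ?thesis
    unfolding has_vector_derivative_def by (subst has_derivative_componentwise_within) simp
qed

lemma bounded_linear_matrix_mult_left: "bounded_linear (\<lambda>B::real^'n^'n. A ** B)"
  unfolding linear_conv_bounded_linear[symmetric]
  by (rule linearI) (simp_all add: matrix_add_ldistrib matrix_scalar_ac scalar_matrix_assoc)

lemma bounded_linear_matrix_vector_mult_left: "bounded_linear (\<lambda>B::real^'n^'m. B *v x)"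
  unfolding linear_conv_bounded_linear[symmetric]
  by (rule linearI) (simp_all add: matrix_vector_mult_add_rdistrib scaleR_matrix_vector_assoc)

lemma norm_matrix_vector_mult_le: "norm (A *v x) \<le> onorm ((*v) A) * norm x"
  for A :: "real^'n^'m"
  by (rule onorm[OF matrix_vector_mul_bounded_linear])

lemma mpow_scaleR: "mpow (c *\<^sub>R A) k = c ^ k *\<^sub>R mpow A k"
  by (induction k) (simp_all add: matrix_scalar_ac scalar_matrix_assoc[symmetric])

lemma mpow_Suc_mult: "mpow A (Suc k) *v x = A *v (mpow A k *v x)"
  by (simp add: matrix_vector_mul_assoc)

lemma norm_mpow_le:
  fixes A :: "real^'n^'n"
  shows "norm (mpow A k) \<le> onorm (\<lambda>B::real^'n^'n. A ** B) ^ k * norm (mat 1 :: real^'n^'n)"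
proof (induction k)
  case (Suc k)
  let ?L = "onorm (\<lambda>B::real^'n^'n. A ** B)"
  have "norm (mpow A (Suc k)) \<le> ?L * norm (mpow A k)"
    using onorm[OF bounded_linear_matrix_mult_left, of A "mpow A k"] by simp
  also have "\<dots> \<le> ?L * (?L ^ k * norm (mat 1 :: real^'n^'n))"
    using Suc onorm_pos_le[OF bounded_linear_matrix_mult_left] by (rule mult_left_mono)
  finally show ?case by simp
qed simp

lemma norm_mpow_mult_le: "norm (mpow A k *v x) \<le> onorm ((*v) A) ^ k * norm x"
proof (induction k)
  case (Suc k)
  have "norm (mpow A (Suc k) *v x) \<le> onorm ((*v) A) * norm (mpow A k *v x)"
    unfolding mpow_Suc_mult by (rule norm_matrix_vector_mult_le)
  also have "\<dots> \<le> onorm ((*v) A) * (onorm ((*v) A) ^ k * norm x)"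
    using Suc onorm_pos_le[OF matrix_vector_mul_bounded_linear] by (rule mult_left_mono)
  finally show ?case by simp
qed simp

lemma sums_vec_nth: "X sums a \<Longrightarrow> (\<lambda>k. X k $ i) sums (a $ i)"
  for a :: "'a::real_normed_vector^'n"
  using bounded_linear.sums[OF bounded_linear_vec_nth] .

lemma summable_exp_series_mult: "summable (\<lambda>k. C ^ k / fact k * (B::real))"
  using summable_exp_generic[of C] by (intro summable_mult2) (simp add: inverse_eq_divide mult.commute)

lemma summable_mexp: "summable (\<lambda>k. (1 / fact k) *\<^sub>R mpow (A::real^'n^'n) k)"
proof (rule summable_comparison_test'[OF summable_exp_series_mult])
  fix k :: nat
  show "norm ((1 / fact k) *\<^sub>R mpow A k) \<le> onorm (\<lambda>B::real^'n^'n. A ** B) ^ k / fact k * norm (mat 1 :: real^'n^'n)"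
    using norm_mpow_le[of A k] by (simp add: divide_right_mono del: mpow.simps)
qed

lemma mexp_mult_sums:
  "(\<lambda>k. (s ^ k / fact k) *\<^sub>R (mpow q k *v x)) sums (mexp (s *\<^sub>R q) *v x)"
proof -
  have "(\<lambda>k. (1 / fact k) *\<^sub>R mpow (s *\<^sub>R q) k) sums mexp (s *\<^sub>R q)"
    unfolding mexp_def using summable_mexp by (rule summable_sums)
  from bounded_linear.sums[OF bounded_linear_matrix_vector_mult_left this, of x] show ?thesis
    by (simp add: mpow_scaleR scaleR_matrix_vector_assoc)
qed

lemma mexp_zero_mult [simp]: "mexp 0 *v x = x"
proof -
  have "(\<lambda>k. ((0::real) ^ k / fact k) *\<^sub>R (mpow q k *v x)) = (\<lambda>k. if k = 0 then x else 0)"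
    by (auto simp: fun_eq_iff)
  then show ?thesis using mexp_mult_sums[of 0 q x] sums_single[of 0 "\<lambda>_. x"] sums_unique2 by force
qed

text \<open>Componentwise, \<open>s \<mapsto> e\<^bsup>sq\<^esup>x\<close> is a real power series with infinite radius of
  convergence, so it can be differentiated termwise.\<close>
lemma has_vector_derivative_mexp_at:
  "((\<lambda>s. mexp (s *\<^sub>R q) *v x) has_vector_derivative (q *v (mexp (s *\<^sub>R q) *v x))) (at s)"
proof (rule has_vector_derivative_componentwise)
  fix i
  define C where "C = onorm ((*v) q)"
  define a where "a k = mpow q k *v x" for k
  define c where "c k = a k $ i / fact k" for k
  have val: "(mexp (t *\<^sub>R q) *v x) $ i = (\<Sum>k. c k * t ^ k)" for t
    using sums_vec_nth[OF mexp_mult_sums[of t q x]]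
    by (simp add: a_def c_def sums_iff mult.commute)
  have summable: "summable (\<lambda>k. c k * y ^ k)" for y
  proof (rule summable_comparison_test'[OF summable_exp_series_mult])
    fix k
    have "norm (c k * y ^ k) = \<bar>a k $ i\<bar> * \<bar>y\<bar> ^ k / fact k"
      by (simp add: c_def abs_mult power_abs)
    also have "\<dots> \<le> C ^ k * norm x * \<bar>y\<bar> ^ k / fact k"
      using order.trans[OF component_le_norm_cart norm_mpow_mult_le]
      by (intro divide_right_mono mult_right_mono) (auto simp: a_def C_def)
    finally show "norm (c k * y ^ k) \<le> (C * \<bar>y\<bar>) ^ k / fact k * norm x"
      by (simp add: power_mult_distrib mult_ac)
  qed
  have diffs_c: "diffs c k = a (Suc k) $ i / fact k" for k
    by (simp add: diffs_def c_def fact_Suc del: of_nat_Suc)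
  have "(\<lambda>k. (s ^ k / fact k) *\<^sub>R a (Suc k)) sums (q *v (mexp (s *\<^sub>R q) *v x))"
    using bounded_linear.sums[OF matrix_vector_mul_bounded_linear mexp_mult_sums, of q s q x]
    by (simp add: a_def matrix_vector_mult_scaleR matrix_vector_mul_assoc)
  from sums_vec_nth[OF this]
  have "(\<Sum>k. diffs c k * s ^ k) = (q *v (mexp (s *\<^sub>R q) *v x)) $ i"
    by (simp add: sums_iff diffs_c mult.commute)
  with termdiffs_strong_converges_everywhere[OF summable, of s]
  show "((\<lambda>t. (mexp (t *\<^sub>R q) *v x) $ i) has_real_derivative (q *v (mexp (s *\<^sub>R q) *v x)) $ i) (at s)"
    by (simp add: val)
qed

lemma has_vector_derivative_mexp:
  "((\<lambda>s. mexp (s *\<^sub>R q) *v x) has_vector_derivative (q *v (mexp (s *\<^sub>R q) *v x))) (at s within S)"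
  using has_vector_derivative_mexp_at has_vector_derivative_at_within by blast

lemma continuous_on_mexp: "continuous_on S (\<lambda>s. mexp (s *\<^sub>R q) *v x)"
  by (intro continuous_at_imp_continuous_on ballI
      has_vector_derivative_continuous[OF has_vector_derivative_mexp_at])

lemma mexp_mult_eq_mult_integral:
  assumes "0 \<le> s"
  shows "mexp (s *\<^sub>R q) *v f = q *v integral {0..s} (\<lambda>r. mexp (r *\<^sub>R q) *v f) + f"
proof -
  have "((\<lambda>r. q *v (mexp (r *\<^sub>R q) *v f)) has_integral (mexp (s *\<^sub>R q) *v f - f)) {0..s}"
    using fundamental_theorem_of_calculus[OF assms has_vector_derivative_mexp] by simp
  moreover have "((\<lambda>r. mexp (r *\<^sub>R q) *v f) has_integral integral {0..s} (\<lambda>r. mexp (r *\<^sub>R q) *v f)) {0..s}"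
    by (intro integrable_integral integrable_continuous_interval continuous_on_mexp)
  from has_integral_linear[OF this matrix_vector_mul_bounded_linear, of q]
  have "((\<lambda>r. q *v (mexp (r *\<^sub>R q) *v f)) has_integral q *v integral {0..s} (\<lambda>r. mexp (r *\<^sub>R q) *v f)) {0..s}"
    by (simp add: o_def)
  ultimately show ?thesis by (metis diff_add_cancel has_integral_unique)
qed

section \<open>A comparison principle for Metzler matrices\<close>

lemma has_real_derivative_min_zero_sq: "((\<lambda>x::real. (min x 0)\<^sup>2) has_real_derivative 2 * min x 0) (at x)"
proof -
  consider "x < 0" | "x > 0" | "x = 0" by linarith
  then show ?thesis
  proof cases
    case 1
    have "((\<lambda>x::real. x\<^sup>2) has_real_derivative 2 * min x 0) (at x)"
      using 1 by (auto intro!: derivative_eq_intros)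
    then show ?thesis
      by (rule has_field_derivative_transform_within_open[of _ _ _ "{..<0}"]) (use 1 in auto)
  next
    case 2
    have "((\<lambda>x::real. 0) has_real_derivative 2 * min x 0) (at x)" using 2 by simp
    then show ?thesis
      by (rule has_field_derivative_transform_within_open[of _ _ _ "{0<..}"]) (use 2 in auto)
  next
    case 3
    have "((\<lambda>y::real. (min y 0)\<^sup>2 / y) \<longlongrightarrow> 0) (at 0)"
    proof (rule Lim_null_comparison)
      show "\<forall>\<^sub>F y in at 0. norm ((min y 0)\<^sup>2 / y) \<le> \<bar>y\<bar>"
        by (simp add: min_def power2_eq_square abs_mult)
      show "((\<lambda>y::real. \<bar>y\<bar>) \<longlongrightarrow> 0) (at 0)"
        by (intro tendsto_rabs_zero tendsto_ident_at)
    qed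
    then show ?thesis using 3 by (simp add: has_field_derivative_iff)
  qed
qed

lemma le_left_if_derivative_nonpos:
  fixes \<psi> :: "real \<Rightarrow> real"
  assumes "\<And>s. s \<in> {0..T} \<Longrightarrow> (\<psi> has_real_derivative d s) (at s within {0..T})"
    and "\<And>s. s \<in> {0..T} \<Longrightarrow> d s \<le> 0" and "s \<in> {0..T}"
  shows "\<psi> s \<le> \<psi> 0"
proof -
  have "\<exists>x\<in>{0..s}. \<psi> s - \<psi> 0 = (\<lambda>h. h * d x) (s - 0)"
  proof (rule mvt_very_simple)
    fix x assume "0 \<le> x" "x \<le> s"
    with assms have "(\<psi> has_real_derivative d x) (at x within {0..T})" by auto
    then have "(\<psi> has_real_derivative d x) (at x within {0..s})"
      by (rule DERIV_subset) (use assms in auto)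
    then show "(\<psi> has_derivative (\<lambda>h. h * d x)) (at x within {0..s})"
      by (simp add: has_field_derivative_def mult.commute[of _ "d x"])
  qed (use assms in auto)
  then obtain x where "x \<in> {0..s}" "\<psi> s - \<psi> 0 = s * d x" by auto
  moreover have "s * d x \<le> 0" using assms \<open>x \<in> {0..s}\<close> by (intro mult_nonneg_nonpos) auto
  ultimately show ?thesis by linarith
qed

text \<open>The squared negative part \<open>\<Sum>\<^sub>i min (w\<^sub>i, 0)\<^sup>2\<close> is a Lyapunov function:
  the hypothesis bounds its derivative by \<open>2K\<close> times itself, so by Gronwall it stays zero.\<close>
lemma nonneg_by_negative_part_estimate:
  fixes w :: "real \<Rightarrow> real^'n"
  assumes der: "\<And>s. s \<in> {0..T} \<Longrightarrow> (w has_vector_derivative w' s) (at s within {0..T})"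
    and w0: "0 \<le> w 0"
    and estimate: "\<And>s. s \<in> {0..T} \<Longrightarrow>
      (\<Sum>i\<in>UNIV. min (w s $ i) 0 * w' s $ i) \<le> K * (\<Sum>i\<in>UNIV. (min (w s $ i) 0)\<^sup>2)"
    and s: "s \<in> {0..T}"
  shows "0 \<le> w s"
proof -
  define \<phi> where "\<phi> s = (\<Sum>i\<in>UNIV. (min (w s $ i) 0)\<^sup>2)" for s
  define \<phi>' where "\<phi>' s = (\<Sum>i\<in>UNIV. 2 * min (w s $ i) 0 * w' s $ i)" for s
  define d where "d s = exp (- (2*K) * s) * (\<phi>' s - 2 * K * \<phi> s)" for s
  have "(\<phi> has_real_derivative \<phi>' s) (at s within {0..T})" if "s \<in> {0..T}" for s
    unfolding \<phi>_def \<phi>'_def using der[OF that]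
    by (intro DERIV_sum DERIV_chain2[OF has_real_derivative_min_zero_sq] has_vector_derivative_vec_nth)
  then have "((\<lambda>s. exp (- (2*K) * s) * \<phi> s) has_real_derivative d s) (at s within {0..T})"
    if "s \<in> {0..T}" for s
    using that by (auto intro!: derivative_eq_intros simp: d_def algebra_simps)
  moreover have "d s \<le> 0" if "s \<in> {0..T}" for s
  proof -
    have "\<phi>' s = 2 * (\<Sum>i\<in>UNIV. min (w s $ i) 0 * w' s $ i)"
      by (simp add: \<phi>'_def sum_distrib_left mult.assoc)
    with estimate[OF that] show ?thesis by (simp add: d_def \<phi>_def mult_nonneg_nonpos)
  qed
  ultimately have "exp (- (2*K) * s) * \<phi> s \<le> exp (- (2*K) * 0) * \<phi> 0"
    by (rule le_left_if_derivative_nonpos[OF _ _ s])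
  moreover have "\<phi> 0 = 0" using w0 by (simp add: \<phi>_def less_eq_vec_def)
  ultimately have "\<phi> s \<le> 0" by (simp add: mult_le_0_iff)
  moreover have "(min (w s $ i) 0)\<^sup>2 \<le> \<phi> s" for i
    unfolding \<phi>_def by (rule member_le_sum) auto
  ultimately have "(min (w s $ i) 0)\<^sup>2 \<le> 0" for i
    by (meson order_trans)
  then have "0 \<le> w s $ i" for i
    by (metis min.absorb_iff2 power2_less_eq_zero_iff)
  then show ?thesis by (simp add: less_eq_vec_def)
qed

lemma nonneg_if_inward_derivative:
  fixes w :: "real \<Rightarrow> real^'n"
  assumes der: "\<And>s. s \<in> {0..T} \<Longrightarrow> (w has_vector_derivative w' s) (at s within {0..T})"
    and w0: "0 \<le> w 0"
    and inward: "\<And>s i. s \<in> {0..T} \<Longrightarrow> w s $ i < 0 \<Longrightarrow> 0 \<le> w' s $ i"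
    and s: "s \<in> {0..T}"
  shows "0 \<le> w s"
proof (rule nonneg_by_negative_part_estimate[OF der w0 _ s, of 0])
  fix s assume "s \<in> {0..T}"
  then have "min (w s $ i) 0 * w' s $ i \<le> 0" for i
    using inward[of s i] by (cases "w s $ i < 0") (auto simp: mult_nonpos_nonneg)
  then show "(\<Sum>i\<in>UNIV. min (w s $ i) 0 * w' s $ i) \<le> 0 * (\<Sum>i\<in>UNIV. (min (w s $ i) 0)\<^sup>2)"
    by (simp add: sum_nonpos)
qed

lemma abs_mult_le_max_sq: "\<bar>a\<bar> * \<bar>b\<bar> \<le> max (a\<^sup>2) (b\<^sup>2 :: real)"
proof (cases "\<bar>a\<bar> \<le> \<bar>b\<bar>")
  case True
  then have "\<bar>a\<bar> * \<bar>b\<bar> \<le> \<bar>b\<bar> * \<bar>b\<bar>" by (intro mult_right_mono) auto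
  then show ?thesis by (simp add: power2_eq_square abs_mult[symmetric])
next
  case False
  then have "\<bar>a\<bar> * \<bar>b\<bar> \<le> \<bar>a\<bar> * \<bar>a\<bar>" by (intro mult_left_mono) auto
  then show ?thesis by (simp add: power2_eq_square abs_mult[symmetric])
qed

text \<open>Only the diagonal entries of \<open>q\<close> can have a sign that hurts, and there \<open>min (x\<^sub>i, 0) x\<^sub>i\<close>
  is the square of the negative part.\<close>
lemma negative_part_Metzler_estimate:
  fixes x d :: "real^'n" and q :: "real^'n^'n"
  assumes Metzler: "\<And>i j. i \<noteq> j \<Longrightarrow> 0 \<le> q $ i $ j" and ge: "q *v x \<le> d"
  shows "(\<Sum>i\<in>UNIV. min (x $ i) 0 * d $ i)
    \<le> (\<Sum>i\<in>UNIV. \<Sum>j\<in>UNIV. \<bar>q $ i $ j\<bar>) * (\<Sum>i\<in>UNIV. (min (x $ i) 0)\<^sup>2)"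
proof -
  define n where "n i = min (x $ i) 0" for i
  define \<Phi> where "\<Phi> = (\<Sum>i\<in>UNIV. (n i)\<^sup>2)"
  have n_sq_le: "(n i)\<^sup>2 \<le> \<Phi>" for i unfolding \<Phi>_def by (rule member_le_sum) auto
  have entry: "n i * (q $ i $ j * x $ j) \<le> \<bar>q $ i $ j\<bar> * \<Phi>" for i j
  proof -
    have "n i * (q $ i $ j * x $ j) \<le> q $ i $ j * (n i * n j)"
    proof (cases "i = j")
      case False
      then have "(n i * q $ i $ j) * x $ j \<le> (n i * q $ i $ j) * n j"
        using Metzler[of i j] by (intro mult_left_mono_neg) (auto simp: n_def mult_nonpos_nonneg)
      then show ?thesis by (simp add: algebra_simps)
    qed (simp add: n_def min_def)
    also have "\<dots> \<le> \<bar>q $ i $ j\<bar> * (\<bar>n i\<bar> * \<bar>n j\<bar>)"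
      by (metis abs_ge_self abs_mult)
    also have "\<dots> \<le> \<bar>q $ i $ j\<bar> * \<Phi>"
      using abs_mult_le_max_sq[of "n i" "n j"] n_sq_le[of i] n_sq_le[of j] by (intro mult_left_mono) auto
    finally show ?thesis .
  qed
  have "(\<Sum>i\<in>UNIV. n i * d $ i) \<le> (\<Sum>i\<in>UNIV. n i * (q *v x) $ i)"
    using ge by (intro sum_mono mult_left_mono_neg) (auto simp: n_def less_eq_vec_def)
  also have "\<dots> = (\<Sum>i\<in>UNIV. \<Sum>j\<in>UNIV. n i * (q $ i $ j * x $ j))"
    by (simp add: matrix_vector_mult_def sum_distrib_left)
  also have "\<dots> \<le> (\<Sum>i\<in>UNIV. \<Sum>j\<in>UNIV. \<bar>q $ i $ j\<bar> * \<Phi>)"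
    by (intro sum_mono entry)
  finally show ?thesis by (simp add: n_def \<Phi>_def sum_distrib_right)
qed

lemma Metzler_supersolution_nonneg:
  fixes w :: "real \<Rightarrow> real^'n" and q :: "real^'n^'n"
  assumes Metzler: "\<And>i j. i \<noteq> j \<Longrightarrow> 0 \<le> q $ i $ j"
    and der: "\<And>s. s \<in> {0..T} \<Longrightarrow> (w has_vector_derivative w' s) (at s within {0..T})"
    and w0: "0 \<le> w 0"
    and super: "\<And>s. s \<in> {0..T} \<Longrightarrow> q *v w s \<le> w' s"
    and s: "s \<in> {0..T}"
  shows "0 \<le> w s"
  by (rule nonneg_by_negative_part_estimate[OF der w0 negative_part_Metzler_estimate[OF Metzler super] s])

section \<open>The semigroups \<open>S\<^sub>q\<close>\<close>

lemma Q_matrix_Metzler: "is_Q_matrix q \<Longrightarrow> i \<noteq> j \<Longrightarrow> 0 \<le> q $ i $ j"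
  by (simp add: is_Q_matrix_def)

lemma Q_matrix_mult_const: "is_Q_matrix q \<Longrightarrow> q *v vec c = 0"
  by (simp add: is_Q_matrix_def matrix_vector_mult_def vec_eq_iff sum_distrib_right[symmetric])

lemma Q_matrix_mult_eq_sum_diff:
  assumes "is_Q_matrix q"
  shows "(q *v z) $ i = (\<Sum>j\<in>UNIV. q $ i $ j * (z $ j - z $ i))"
proof -
  have "(\<Sum>j\<in>UNIV. q $ i $ j * z $ i) = 0"
    using assms by (simp add: is_Q_matrix_def sum_distrib_right[symmetric])
  then show ?thesis by (simp add: matrix_vector_mult_def algebra_simps sum_subtractf)
qed

lemma Q_matrix_mult_nonpos_at_max:
  assumes "is_Q_matrix q" "\<And>j. z $ j \<le> z $ i"
  shows "(q *v z) $ i \<le> 0"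
  unfolding Q_matrix_mult_eq_sum_diff[OF assms(1)]
proof (rule sum_nonpos)
  fix j show "q $ i $ j * (z $ j - z $ i) \<le> 0"
    using Q_matrix_Metzler[OF assms(1), of i j] assms(2)[of j]
    by (cases "i = j") (auto simp: mult_nonneg_nonpos)
qed

lemma Q_matrix_mult_nonneg_at_min:
  assumes "is_Q_matrix q" "\<And>j. z $ i \<le> z $ j"
  shows "0 \<le> (q *v z) $ i"
  unfolding Q_matrix_mult_eq_sum_diff[OF assms(1)]
proof (rule sum_nonneg)
  fix j show "0 \<le> q $ i $ j * (z $ j - z $ i)"
    using Q_matrix_Metzler[OF assms(1), of i j] assms(2)[of j] by (cases "i = j") auto
qed

lemma at_within_Icc_eq_Ici: "0 \<le> s \<Longrightarrow> s < b \<Longrightarrow> at s within {0..b} = at s within {0::real..}"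
  by (rule at_within_nhd[of s "{..<b}"]) auto

lemma Sq_zero: "Sq q f 0 w = w"
  by (simp add: Sq_def)

lemma has_vector_derivative_Sq:
  assumes "0 \<le> s"
  shows "((\<lambda>s. Sq q f s w) has_vector_derivative (q *v Sq q f s w + f)) (at s within {0..})"
proof -
  have "((\<lambda>u. integral {0..u} (\<lambda>r. mexp (r *\<^sub>R q) *v f)) has_vector_derivative (mexp (s *\<^sub>R q) *v f))
      (at s within {0..s+1})"
    using assms by (intro integral_has_vector_derivative continuous_on_mexp) auto
  then have "((\<lambda>u. integral {0..u} (\<lambda>r. mexp (r *\<^sub>R q) *v f)) has_vector_derivative (mexp (s *\<^sub>R q) *v f))
      (at s within {0..})"
    using at_within_Icc_eq_Ici[OF assms, of "s+1"] by simp
  from has_vector_derivative_add[OF has_vector_derivative_mexp this]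
  show ?thesis
    unfolding Sq_def mexp_mult_eq_mult_integral[OF assms, of q f]
    by (simp add: algebra_simps)
qed

lemma mexp_mult_nonneg:
  assumes Q: "is_Q_matrix q" and s: "0 \<le> s" and x: "0 \<le> x"
  shows "0 \<le> mexp (s *\<^sub>R q) *v x"
  by (rule Metzler_supersolution_nonneg[where T = s, OF Q_matrix_Metzler[OF Q] has_vector_derivative_mexp])
    (use x s in auto)

lemma mexp_mult_const:
  assumes Q: "is_Q_matrix q"
  shows "mexp (s *\<^sub>R q) *v vec c = vec c"
proof -
  have "mpow q k *v vec c = (if k = 0 then vec c else 0)" for k
    using Q_matrix_mult_const[OF Q] by (induction k) (simp_all add: matrix_vector_mul_assoc[symmetric])
  then have "(\<lambda>k. (s ^ k / fact k) *\<^sub>R (mpow q k *v vec c)) = (\<lambda>k. if k = 0 then vec c else 0)"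
    by (simp add: fun_eq_iff)
  then have "(\<lambda>k. (s ^ k / fact k) *\<^sub>R (mpow q k *v vec c)) sums vec c"
    using sums_single[of 0 "\<lambda>_. vec c"] by simp
  with mexp_mult_sums show ?thesis by (rule sums_unique2)
qed

lemma mexp_mult_mono:
  assumes Q: "is_Q_matrix q" and s: "0 \<le> s" and xy: "x \<le> y"
  shows "mexp (s *\<^sub>R q) *v x \<le> mexp (s *\<^sub>R q) *v y"
  using mexp_mult_nonneg[OF Q s, of "y - x"] xy by (simp add: matrix_vector_mult_diff_distrib)

lemma integral_mexp_mult_nonpos:
  assumes Q: "is_Q_matrix q" and f: "f \<le> 0"
  shows "integral {0..s} (\<lambda>r. mexp (r *\<^sub>R q) *v f) \<le> 0"
proof -
  have int: "(\<lambda>r. mexp (r *\<^sub>R q) *v f) integrable_on {0..s}"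
    by (intro integrable_continuous_interval continuous_on_mexp)
  have "integral {0..s} (\<lambda>r. mexp (r *\<^sub>R q) *v f) $ i \<le> 0" for i
  proof -
    have "(mexp (r *\<^sub>R q) *v f) $ i \<le> 0" if "r \<in> {0..s}" for r
      using mexp_mult_mono[OF Q _ f, of r] that by (simp add: less_eq_vec_def)
    moreover have "(\<lambda>r. (mexp (r *\<^sub>R q) *v f) $ i) integrable_on {0..s}"
      using integrable_linear[OF int bounded_linear_vec_nth, of i] by (simp add: o_def)
    ultimately have "integral {0..s} (\<lambda>r. (mexp (r *\<^sub>R q) *v f) $ i) \<le> integral {0..s} (\<lambda>r. 0)"
      by (intro integral_le) auto
    then show ?thesis by (simp add: integral_component_eq_cart[OF int])
  qed
  then show ?thesis by (simp add: less_eq_vec_def)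
qed

lemma Sq_le_const:
  assumes Q: "is_Q_matrix q" and f: "f \<le> 0" and s: "0 \<le> s" and w: "w \<le> vec c"
  shows "Sq q f s w \<le> vec c"
  using add_mono[OF mexp_mult_mono[OF Q s w] integral_mexp_mult_nonpos[OF Q f, of s]]
  by (simp add: Sq_def mexp_mult_const[OF Q])

lemma Sq_mono:
  assumes Q: "is_Q_matrix q" and s: "0 \<le> s" and w: "w \<le> w'"
  shows "Sq q f s w \<le> Sq q f s w'"
  using mexp_mult_mono[OF Q s w] unfolding Sq_def by (rule add_right_mono)

lemma Sq_add_const:
  assumes Q: "is_Q_matrix q"
  shows "Sq q f s (w + vec c) = Sq q f s w + vec c"
  using mexp_mult_const[OF Q, of s c] unfolding Sq_def
  by (simp add: matrix_vector_right_distrib algebra_simps)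

text \<open>\<open>z(r) = S\<^sub>q(r)w - (w + r(qw + f) - Cr\<^sup>2)\<close> is a supersolution of \<open>z' = qz\<close> as soon as
  \<open>q(qw + f) \<ge> -2C\<close>.\<close>
lemma Sq_ge_Taylor:
  assumes Q: "is_Q_matrix q" and s: "0 \<le> s"
    and C: "\<And>i. - 2 * C \<le> (q *v (q *v w + f)) $ i"
  shows "w + s *\<^sub>R (q *v w + f) - vec (C * s\<^sup>2) \<le> Sq q f s w"
proof -
  define z where "z r = Sq q f r w - (w + r *\<^sub>R (q *v w + f) - vec (C * r\<^sup>2))" for r
  define z' where "z' r = (q *v Sq q f r w + f) - ((q *v w + f) - vec (C * (2 * r)))" for r
  have der: "(z has_vector_derivative z' r) (at r within {0..s})" if "r \<in> {0..s}" for r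
  proof -
    have "((\<lambda>r. r *\<^sub>R (q *v w + f)) has_vector_derivative 1 *\<^sub>R (q *v w + f)) (at r within {0..})"
      by (rule bounded_linear.has_vector_derivative[OF bounded_linear_scaleR_left has_vector_derivative_id])
    moreover have "((\<lambda>r. vec (C * r\<^sup>2)) has_vector_derivative vec (C * (2 * r))) (at r within {0..})"
      by (rule has_vector_derivative_componentwise) (auto intro!: derivative_eq_intros)
    ultimately have "((\<lambda>r. w + r *\<^sub>R (q *v w + f) - vec (C * r\<^sup>2)) has_vector_derivative
        0 + 1 *\<^sub>R (q *v w + f) - vec (C * (2 * r))) (at r within {0..})"
      by (intro has_vector_derivative_diff has_vector_derivative_add has_vector_derivative_const)
    from has_vector_derivative_diff[OF has_vector_derivative_Sq[of r q f w] this] that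
    have "(z has_vector_derivative z' r) (at r within {0..})"
      unfolding z_def z'_def by (simp add: algebra_simps)
    then show ?thesis by (rule has_vector_derivative_within_subset) auto
  qed
  have super: "q *v z r \<le> z' r" if "r \<in> {0..s}" for r
  proof -
    have "z' r - q *v z r = r *\<^sub>R (q *v (q *v w + f)) + vec (2 * C * r) - q *v vec (C * r\<^sup>2)"
      by (simp add: z_def z'_def matrix_vector_mult_diff_distrib matrix_vector_mult_scaleR algebra_simps)
    then have diff: "(z' r - q *v z r) $ i = r * (q *v (q *v w + f)) $ i + 2 * C * r" for i
      by (simp add: Q_matrix_mult_const[OF Q])
    have bound: "r * (- 2 * C) \<le> r * (q *v (q *v w + f)) $ i" for i
      using C that by (intro mult_left_mono) auto
    have "0 \<le> (z' r - q *v z r) $ i" for i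
      using bound[of i] unfolding diff by (simp add: algebra_simps)
    then show ?thesis by (simp add: less_eq_vec_def)
  qed
  have "0 \<le> z s"
    by (rule Metzler_supersolution_nonneg[OF Q_matrix_Metzler[OF Q] der _ super])
      (use s in \<open>auto simp: z_def Sq_zero\<close>)
  then show ?thesis by (simp add: z_def)
qed

lemma Sq_ge_Taylor_bounded:
  assumes Q: "is_Q_matrix q"
  obtains C where "0 \<le> C"
    "\<And>w s. norm w \<le> B \<Longrightarrow> 0 \<le> s \<Longrightarrow> w + s *\<^sub>R (q *v w + f) - vec (C * s\<^sup>2) \<le> Sq q f s w"
proof
  define L where "L = onorm ((*v) q)"
  have L: "0 \<le> L" unfolding L_def by (rule onorm_pos_le[OF matrix_vector_mul_bounded_linear])
  show "0 \<le> L * (L * \<bar>B\<bar> + norm f) / 2" using L by simp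
  fix w :: "real^'a" and s :: real assume w: "norm w \<le> B" and s: "0 \<le> s"
  show "w + s *\<^sub>R (q *v w + f) - vec (L * (L * \<bar>B\<bar> + norm f) / 2 * s\<^sup>2) \<le> Sq q f s w"
  proof (rule Sq_ge_Taylor[OF Q s])
    fix i
    have "norm (q *v w) \<le> L * \<bar>B\<bar>"
      using norm_matrix_vector_mult_le[of q w] mult_left_mono[OF _ L, of "norm w" "\<bar>B\<bar>"] w
      unfolding L_def by linarith
    then have "norm (q *v w + f) \<le> L * \<bar>B\<bar> + norm f"
      using norm_triangle_ineq[of "q *v w" f] by linarith
    have "\<bar>(q *v (q *v w + f)) $ i\<bar> \<le> norm (q *v (q *v w + f))"
      by (rule component_le_norm_cart)
    also have "\<dots> \<le> L * norm (q *v w + f)"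
      unfolding L_def by (rule norm_matrix_vector_mult_le)
    also have "\<dots> \<le> L * (L * \<bar>B\<bar> + norm f)"
      by (rule mult_left_mono[OF \<open>norm (q *v w + f) \<le> L * \<bar>B\<bar> + norm f\<close> L])
    finally show "- 2 * (L * (L * \<bar>B\<bar> + norm f) / 2) \<le> (q *v (q *v w + f)) $ i"
      by (simp add: abs_le_iff)
  qed
qed

lemma Sq_ge_Taylor_finite:
  fixes F :: "(real^'n^'n) set" and f :: "real^'n^'n \<Rightarrow> real^'n"
  assumes "finite F" and "\<forall>q\<in>F. is_Q_matrix q"
  obtains C where "0 \<le> C" "\<And>q w s. q \<in> F \<Longrightarrow> norm w \<le> B \<Longrightarrow> 0 \<le> s \<Longrightarrow>
    w + s *\<^sub>R (q *v w + f q) - vec (C * s\<^sup>2) \<le> Sq q (f q) s w"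
proof -
  have "\<forall>q\<in>F. \<exists>C. 0 \<le> C \<and> (\<forall>w s. norm w \<le> B \<longrightarrow> 0 \<le> s \<longrightarrow>
      w + s *\<^sub>R (q *v w + f q) - vec (C * s\<^sup>2) \<le> Sq q (f q) s w)"
  proof
    fix q assume "q \<in> F"
    then obtain C where "0 \<le> C" "\<And>w s. norm w \<le> B \<Longrightarrow> 0 \<le> s \<Longrightarrow>
        w + s *\<^sub>R (q *v w + f q) - vec (C * s\<^sup>2) \<le> Sq q (f q) s w"
      using Sq_ge_Taylor_bounded[of q B "f q"] assms(2) by blast
    then show "\<exists>C. 0 \<le> C \<and> (\<forall>w s. norm w \<le> B \<longrightarrow> 0 \<le> s \<longrightarrow>
        w + s *\<^sub>R (q *v w + f q) - vec (C * s\<^sup>2) \<le> Sq q (f q) s w)" by blast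
  qed
  then obtain Cq where Cq: "\<And>q. q \<in> F \<Longrightarrow> 0 \<le> Cq q"
    "\<And>q w s. q \<in> F \<Longrightarrow> norm w \<le> B \<Longrightarrow> 0 \<le> s \<Longrightarrow>
      w + s *\<^sub>R (q *v w + f q) - vec (Cq q * s\<^sup>2) \<le> Sq q (f q) s w"
    by metis
  show ?thesis
  proof (rule that[of "\<Sum>q\<in>F. Cq q"])
    show "0 \<le> (\<Sum>q\<in>F. Cq q)" using Cq(1) by (rule sum_nonneg)
    fix q and w :: "real^'n" and s :: real assume q: "q \<in> F" and w: "norm w \<le> B" and s: "0 \<le> s"
    have "Cq q \<le> (\<Sum>q\<in>F. Cq q)" using Cq(1) assms(1) q by (intro member_le_sum) auto
    then have "vec (Cq q * s\<^sup>2) \<le> (vec ((\<Sum>q\<in>F. Cq q) * s\<^sup>2) :: real^'n)"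
      by (simp add: less_eq_vec_def mult_right_mono)
    with Cq(2)[OF q w s]
    show "w + s *\<^sub>R (q *v w + f q) - vec ((\<Sum>q\<in>F. Cq q) * s\<^sup>2) \<le> Sq q (f q) s w"
      by (meson diff_left_mono order_trans)
  qed
qed

lemma vsup_le:
  assumes "A \<noteq> {}" "\<And>a. a \<in> A \<Longrightarrow> g a \<le> v"
  shows "vsup A g \<le> v"
  using assms unfolding vsup_def less_eq_vec_def by (auto intro!: cSUP_least)

lemma vsup_upper:
  assumes "\<And>i. bdd_above ((\<lambda>a. g a $ i) ` A)" "a \<in> A"
  shows "g a \<le> vsup A g"
  using assms unfolding vsup_def less_eq_vec_def by (auto intro!: cSUP_upper)

lemma vsup_mono:
  assumes "A \<noteq> {}" "\<And>i. bdd_above ((\<lambda>a. g' a $ i) ` A)" "\<And>a. a \<in> A \<Longrightarrow> g a \<le> g' a"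
  shows "vsup A g \<le> vsup A g'"
  by (rule vsup_le[OF assms(1)]) (meson assms(2,3) order_trans vsup_upper)

lemma vsup_const: "A \<noteq> {} \<Longrightarrow> vsup A (\<lambda>a. v) = v"
  by (simp add: vsup_def vec_eq_iff)

lemma le_vec_norm: "(u::real^'n) \<le> vec (norm u)"
  by (simp add: less_eq_vec_def) (meson abs_ge_self component_le_norm_cart order_trans)

lemma bdd_above_component_if_le_vec:
  "(\<And>a. a \<in> A \<Longrightarrow> g a \<le> vec c) \<Longrightarrow> bdd_above ((\<lambda>a. g a $ i) ` A)"
  by (rule bdd_aboveI2[of _ _ c]) (auto simp: less_eq_vec_def)

definition steps :: "real list \<Rightarrow> real list" where
  "steps ts = map2 (-) (tl ts) ts"

lemma steps_Cons_Cons: "steps (a # b # ts) = (b - a) # steps (b # ts)"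
  by (simp add: steps_def)

lemma steps_nonneg: "sorted ts \<Longrightarrow> h \<in> set (steps ts) \<Longrightarrow> 0 \<le> h"
  by (induction ts rule: induct_list012) (auto simp: steps_Cons_Cons steps_def)

lemma sum_list_steps: "ts \<noteq> [] \<Longrightarrow> sum_list (steps ts) = last ts - hd ts"
  by (induction ts rule: induct_list012) (auto simp: steps_Cons_Cons steps_def)

lemma steps_map_upt: "steps (map g [0..<Suc N]) = map (\<lambda>k. g (Suc k) - g k) [0..<N]"
  unfolding steps_def by (rule nth_equalityI) (auto simp: nth_tl simp del: upt_Suc)

lemma last_sorted_eq_Max:
  assumes "sorted (xs::real list)" "xs \<noteq> []"
  shows "last xs = Max (set xs)"
proof (rule Max_eqI[symmetric])
  fix y assume "y \<in> set xs"
  then obtain i where "i < length xs" "y = xs ! i" by (auto simp: in_set_conv_nth)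
  then show "y \<le> last xs"
    using sorted_nth_mono[OF assms(1), of i "length xs - 1"] assms(2) by (simp add: last_conv_nth)
qed (use assms in auto)

lemma sorted_list_of_set_image_strict_mono:
  fixes g :: "nat \<Rightarrow> real"
  assumes "strict_mono g"
  shows "sorted_list_of_set (g ` {0..N}) = map g [0..<Suc N]"
proof -
  have "inj g" using assms strict_mono_imp_inj_on by blast
  have "sorted_wrt (<) (map g [0..<Suc N])"
    unfolding sorted_wrt_map
    by (rule sorted_wrt_mono_rel[OF _ sorted_wrt_upt]) (use assms in \<open>auto simp: strict_mono_def\<close>)
  moreover have "set (map g [0..<Suc N]) = g ` {0..N}"
    by (simp del: upt_Suc add: atLeastLessThanSuc_atLeastAtMost)
  moreover have "length (map g [0..<Suc N]) = card (g ` {0..N})"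
    using card_image[OF inj_on_subset[OF \<open>inj g\<close>]] by simp
  ultimately show ?thesis using sorted_list_of_set_unique[of "g ` {0..N}" "map g [0..<Suc N]"] by blast
qed

lemma Epi_uniform_partition:
  assumes h: "0 < h" and N: "1 \<le> N"
  shows "Epi P f ((\<lambda>k. real k * h) ` {0..N}) = Ecomp P f (replicate N h)"
proof -
  define g where "g k = real k * h" for k
  have "strict_mono g" using h by (auto simp: strict_mono_def g_def)
  moreover have "g ` {0..N} \<noteq> {0}"
  proof
    assume "g ` {0..N} = {0}"
    then have "g N = 0" by auto
    then show False using h N by (simp add: g_def)
  qed
  moreover have "steps (map g [0..<Suc N]) = replicate N h"
    unfolding steps_map_upt by (simp add: g_def algebra_simps map_replicate_const)
  ultimately show ?thesis
    using sorted_list_of_set_image_strict_mono[of g N] unfolding g_def[abs_def]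
    by (simp add: Epi_def Let_def steps_def)
qed

lemma uniform_partition_in_partitions_at:
  assumes h: "0 < h"
  shows "(\<lambda>k. real k * h) ` {0..N} \<in> partitions_at (real N * h)"
proof -
  have "Max ((\<lambda>k. real k * h) ` {0..N}) = real N * h"
    using h by (intro Max_eqI) (auto intro: mult_right_mono)
  moreover have "0 \<in> (\<lambda>k. real k * h) ` {0..N}" by (rule image_eqI[of _ _ 0]) auto
  ultimately show ?thesis using h by (auto simp: partitions_at_def partitions_def)
qed

section \<open>Convex functions are locally Lipschitz\<close>

lemma convex_on_diff_le:
  fixes g :: "'a::real_normed_vector \<Rightarrow> real"
  assumes cv: "convex_on UNIV g" and M: "\<And>z. norm z \<le> R + 1 \<Longrightarrow> \<bar>g z\<bar> \<le> M"
    and x: "norm x \<le> R" and y: "norm y \<le> R"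
  shows "g y - g x \<le> 2 * M * norm (y - x)"
proof (cases "x = y")
  case True then show ?thesis using M[of x] x by auto
next
  case False
  define d where "d = norm (y - x)"
  have d: "d > 0" using False by (simp add: d_def)
  \<comment> \<open>extend the segment from \<open>x\<close> through \<open>y\<close> by one unit beyond \<open>y\<close>\<close>
  define z where "z = y + (1/d) *\<^sub>R (y - x)"
  have "norm z \<le> norm y + norm ((1/d) *\<^sub>R (y - x))" unfolding z_def by (rule norm_triangle_ineq)
  also have "norm ((1/d) *\<^sub>R (y - x)) = 1" using d by (simp add: d_def)
  finally have nz: "norm z \<le> R + 1" using y by simp
  have y_eq: "y = (1 - d/(1+d)) *\<^sub>R x + (d/(1+d)) *\<^sub>R z"
  proof -
    have "1 - d/(1+d) = 1/(1+d)" "(d/(1+d)) * (1/d) = 1/(1+d)" using d by (simp_all add: field_simps)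
    then have "(1 - d/(1+d)) *\<^sub>R x + (d/(1+d)) *\<^sub>R z
        = (1/(1+d)) *\<^sub>R x + ((d/(1+d)) *\<^sub>R y + (1/(1+d)) *\<^sub>R (y - x))"
      by (simp only: z_def scaleR_add_right scaleR_scaleR)
    also have "\<dots> = (1/(1+d) + d/(1+d)) *\<^sub>R y" by (simp add: algebra_simps)
    also have "\<dots> = y" using d by (simp add: add_divide_distrib[symmetric])
    finally show ?thesis ..
  qed
  have "g y \<le> (1 - d/(1+d)) * g x + (d/(1+d)) * g z"
    unfolding y_eq using d by (intro convex_onD[OF cv]) auto
  then have "g y - g x \<le> (d/(1+d)) * (g z - g x)"
    by (simp add: left_diff_distrib right_diff_distrib)
  also have "\<dots> \<le> (d/(1+d)) * (2*M)"
    using M[OF nz] M[of x] x d by (intro mult_left_mono) auto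
  also have "\<dots> \<le> d * (2*M)"
    using M[of x] x d by (intro mult_right_mono) (auto simp: field_simps)
  finally show ?thesis by (simp add: d_def mult_ac)
qed

lemma convex_on_lipschitz_on_cball:
  fixes g :: "'a::euclidean_space \<Rightarrow> real"
  assumes cv: "convex_on UNIV g"
  shows "\<exists>L. L-lipschitz_on (cball 0 R) g"
proof -
  have "compact (g ` cball 0 (R+1))"
    by (intro compact_continuous_image continuous_on_subset[OF convex_on_continuous[OF open_UNIV cv]]) auto
  then obtain M where "\<forall>w\<in>g ` cball 0 (R+1). norm w \<le> M" and "0 \<le> M"
    using compact_imp_bounded bounded_iff by (metis order.trans abs_ge_zero real_norm_def linear)
  then have M: "\<And>z. norm z \<le> R + 1 \<Longrightarrow> \<bar>g z\<bar> \<le> M" by auto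
  have "(2 * M)-lipschitz_on (cball 0 R) g"
  proof (rule lipschitz_onI)
    fix x y :: 'a assume "x \<in> cball 0 R" "y \<in> cball 0 R"
    then show "dist (g x) (g y) \<le> 2 * M * dist x y"
      using convex_on_diff_le[OF cv M, where x = x and y = y] convex_on_diff_le[OF cv M, where x = y and y = x]
      by (simp add: dist_norm abs_le_iff norm_minus_commute)
  qed (use \<open>0 \<le> M\<close> in simp)
  then show ?thesis ..
qed

definition ode_solution :: "('a::real_normed_vector \<Rightarrow> 'a) \<Rightarrow> (real \<Rightarrow> 'a) \<Rightarrow> bool" where
  "ode_solution F v \<longleftrightarrow> (\<forall>t\<ge>0. (v has_vector_derivative F (v t)) (at t within {0..}))"

lemma ode_solutionD: "ode_solution F v \<Longrightarrow> 0 \<le> t \<Longrightarrow> (v has_vector_derivative F (v t)) (at t within {0..})"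
  by (simp add: ode_solution_def)

lemma ode_solution_on_Icc:
  "ode_solution F v \<Longrightarrow> s \<in> {0..T} \<Longrightarrow> (v has_vector_derivative F (v s)) (at s within {0..T})"
  by (rule has_vector_derivative_within_subset[OF ode_solutionD]) auto

lemma continuous_on_ode_solution:
  assumes "ode_solution F v"
  shows "continuous_on {0..} v"
  unfolding continuous_on_eq_continuous_within
proof
  fix t :: real assume "t \<in> {0..}"
  then show "continuous (at t within {0..}) v"
    using has_vector_derivative_continuous[OF ode_solutionD[OF assms]] by simp
qed

lemma ode_solution_shift:
  assumes "ode_solution F v" and "0 \<le> r"
  shows "ode_solution F (\<lambda>s. v (r + s))"
  unfolding ode_solution_def
proof (intro allI impI)
  fix s :: real assume s: "0 \<le> s"
  have shift: "((\<lambda>s. r + s) has_vector_derivative 1) (at s within {0..})"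
    by (auto intro!: derivative_eq_intros)
  have "(v has_vector_derivative F (v (r + s))) (at ((\<lambda>s. r + s) s) within (\<lambda>s. r + s) ` {0..})"
    by (rule has_vector_derivative_within_subset[OF ode_solutionD[OF assms(1)]]) (use assms(2) s in auto)
  from vector_diff_chain_within[OF shift this]
  show "((\<lambda>s. v (r + s)) has_vector_derivative F (v (r + s))) (at s within {0..})"
    by (simp add: o_def)
qed

lemma ode_solution_cong:
  assumes "ode_solution F v" and "\<And>t. 0 \<le> t \<Longrightarrow> w t = v t"
  shows "ode_solution F w"
  unfolding ode_solution_def
proof (intro allI impI)
  fix t :: real assume t: "0 \<le> t"
  have "(v has_vector_derivative F (w t)) (at t within {0..})"
    using ode_solutionD[OF assms(1) t] assms(2)[OF t] by simp
  then show "(w has_vector_derivative F (w t)) (at t within {0..})"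
    by (rule has_vector_derivative_transform[of t "{0..}" w v, rotated 2]) (use t assms(2) in auto)
qed

lemma norm_ode_solution_increment_le:
  fixes F :: "'a::banach \<Rightarrow> 'a"
  assumes y: "ode_solution F y" and h: "0 \<le> h" and M: "\<And>s. s \<in> {0..h} \<Longrightarrow> norm (F (y s)) \<le> M"
  shows "norm (y h - y 0) \<le> M * h"
proof -
  have "norm (F (y 0)) \<le> M" using M[of 0] h by simp
  then have "0 \<le> M" by (rule order_trans[OF norm_ge_zero])
  moreover have "((\<lambda>s. F (y s)) has_integral y h - y 0) {0..h}"
    by (rule fundamental_theorem_of_calculus[OF h ode_solution_on_Icc[OF y]])
  ultimately show ?thesis
    using has_integral_bound[of M "\<lambda>s. F (y s)" "y h - y 0" 0 h] M h by simp
qed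

lemma classical_solution_iff:
  assumes "continuous_on UNIV F"
  shows "classical_solution F u0 v \<longleftrightarrow> ode_solution F v \<and> v 0 = u0"
proof
  assume "classical_solution F u0 v"
  then obtain v' where "\<forall>t\<ge>0. (v has_vector_derivative v' t) (at t within {0..})"
    and "\<forall>t\<ge>0. v' t = F (v t)" and "v 0 = u0"
    unfolding classical_solution_def by blast
  then show "ode_solution F v \<and> v 0 = u0" by (simp add: ode_solution_def)
next
  assume v: "ode_solution F v \<and> v 0 = u0"
  have "continuous_on {0..} (\<lambda>t. F (v t))"
    by (rule continuous_on_compose2[OF assms continuous_on_ode_solution]) (use v in auto)
  with v show "classical_solution F u0 v"
    unfolding classical_solution_def ode_solution_def by (intro conjI exI[of _ "\<lambda>t. F (v t)"]) auto
qed

section \<open>Picard iteration\<close>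

fun picard :: "('a::banach \<Rightarrow> 'a) \<Rightarrow> 'a \<Rightarrow> nat \<Rightarrow> real \<Rightarrow> 'a" where
  "picard F u0 0 t = u0"
| "picard F u0 (Suc n) t = u0 + integral {0..t} (\<lambda>s. F (picard F u0 n s))"

declare picard.simps(2) [simp del]

lemma picard_Suc: "picard F u0 (Suc n) = (\<lambda>t. u0 + integral {0..t} (\<lambda>s. F (picard F u0 n s)))"
  by (simp add: fun_eq_iff picard.simps(2))

lemma picard_zero: "picard F u0 n 0 = u0"
  by (cases n) (simp_all add: picard_Suc)

lemma continuous_on_picard:
  assumes "continuous_on UNIV F"
  shows "continuous_on {0..b} (picard F u0 n)"
proof (induction n)
  case (Suc n)
  have "continuous_on {0..b} (\<lambda>s. F (picard F u0 n s))"
    using Suc by (intro continuous_on_compose2[OF assms]) auto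
  then have "continuous_on {0..b} (\<lambda>t. integral {0..t} (\<lambda>s. F (picard F u0 n s)))"
    by (intro indefinite_integral_continuous_1 integrable_continuous_interval)
  then show ?case by (simp add: picard_Suc continuous_on_add)
qed (simp add: continuous_on_const)

lemma picard_integrable:
  assumes "continuous_on UNIV F"
  shows "(\<lambda>s. F (picard F u0 n s)) integrable_on {0..b}"
  by (intro integrable_continuous_interval continuous_on_compose2[OF assms continuous_on_picard[OF assms]]) auto

lemma has_vector_derivative_picard:
  assumes "continuous_on UNIV F" and "t \<in> {0..b}"
  shows "(picard F u0 (Suc n) has_vector_derivative F (picard F u0 n t)) (at t within {0..b})"
proof -
  have "((\<lambda>t. integral {0..t} (\<lambda>s. F (picard F u0 n s))) has_vector_derivative F (picard F u0 n t))
      (at t within {0..b})"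
    using assms by (intro integral_has_vector_derivative continuous_on_compose2[OF assms(1) continuous_on_picard])
      auto
  from has_vector_derivative_add[OF has_vector_derivative_const[of u0] this] show ?thesis
    by (simp add: picard_Suc)
qed

lemma has_integral_mult_power:
  assumes "0 \<le> t"
  shows "((\<lambda>s. c * s ^ n) has_integral c * t ^ Suc n / real (Suc n)) {0..t}"
proof -
  have "((\<lambda>s. c * s ^ n) has_integral (c * t ^ Suc n / real (Suc n) - c * 0 ^ Suc n / real (Suc n))) {0..t}"
  proof (rule fundamental_theorem_of_calculus[OF assms])
    fix x assume "x \<in> {0..t}"
    show "((\<lambda>s. c * s ^ Suc n / real (Suc n)) has_vector_derivative c * x ^ n) (at x within {0..t})"
      unfolding has_real_derivative_iff_has_vector_derivative[symmetric]
      by (rule derivative_eq_intros refl | simp del: of_nat_Suc)+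
  qed
  then show ?thesis by simp
qed

lemma norm_picard_diff_le:
  assumes lip: "L-lipschitz_on UNIV F" and t: "0 \<le> t"
  shows "norm (picard F u0 (Suc n) t - picard F u0 n t) \<le> norm (F u0) * L ^ n * t ^ Suc n / fact (Suc n)"
  using t
proof (induction n arbitrary: t)
  case 0
  then show ?case by (simp add: picard_Suc)
next
  case (Suc n)
  have cF: "continuous_on UNIV F" by (rule lipschitz_on_continuous_on[OF lip])
  have L: "0 \<le> L" by (rule lipschitz_on_nonneg[OF lip])
  define K where "K = norm (F u0) * L ^ n / fact (Suc n)"
  have "norm (picard F u0 (Suc (Suc n)) t - picard F u0 (Suc n) t) =
      norm (integral {0..t} (\<lambda>s. F (picard F u0 (Suc n) s) - F (picard F u0 n s)))"
    by (simp add: picard.simps(2)[of F u0 "Suc n" t] picard.simps(2)[of F u0 n t]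
        integral_diff[OF picard_integrable[OF cF] picard_integrable[OF cF]])
  also have "\<dots> \<le> integral {0..t} (\<lambda>s. (L * K) * s ^ Suc n)"
  proof (rule integral_norm_bound_integral)
    show "(\<lambda>s. F (picard F u0 (Suc n) s) - F (picard F u0 n s)) integrable_on {0..t}"
      by (intro integrable_diff picard_integrable[OF cF])
    show "(\<lambda>s. (L * K) * s ^ Suc n) integrable_on {0..t}"
      using has_integral_mult_power[OF Suc.prems] by blast
    fix s assume s: "s \<in> {0..t}"
    have "norm (F (picard F u0 (Suc n) s) - F (picard F u0 n s))
        \<le> L * norm (picard F u0 (Suc n) s - picard F u0 n s)"
      by (rule lipschitz_on_normD[OF lip]) auto
    also have "\<dots> \<le> L * (K * s ^ Suc n)"
      using Suc.IH[of s] s L by (intro mult_left_mono) (auto simp: K_def field_simps)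
    finally show "norm (F (picard F u0 (Suc n) s) - F (picard F u0 n s)) \<le> (L * K) * s ^ Suc n"
      by (simp add: mult_ac)
  qed
  also have "\<dots> = (L * K) * t ^ Suc (Suc n) / real (Suc (Suc n))"
    using has_integral_mult_power[OF Suc.prems] by (rule integral_unique)
  also have "\<dots> = norm (F u0) * L ^ Suc n * t ^ Suc (Suc n) / fact (Suc (Suc n))"
    by (simp add: K_def field_simps del: of_nat_Suc)
  finally show ?case .
qed

lemma picard_uniform_limit:
  assumes lip: "L-lipschitz_on UNIV F" and b: "0 \<le> b"
  shows "uniform_limit {0..b} (picard F u0) (\<lambda>t. u0 + (\<Sum>k. picard F u0 (Suc k) t - picard F u0 k t))
    sequentially"
proof -
  define M where "M k = norm (F u0) * b * (L * b) ^ k / fact k" for k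
  have L: "0 \<le> L" by (rule lipschitz_on_nonneg[OF lip])
  have M: "norm (picard F u0 (Suc k) t - picard F u0 k t) \<le> M k" if "t \<in> {0..b}" for k t
  proof -
    have "norm (picard F u0 (Suc k) t - picard F u0 k t) \<le> norm (F u0) * L ^ k * t ^ Suc k / fact (Suc k)"
      using that by (intro norm_picard_diff_le[OF lip]) auto
    also have "\<dots> \<le> norm (F u0) * L ^ k * b ^ Suc k / fact k"
      using that L by (intro frac_le mult_left_mono power_mono) (auto simp: fact_mono)
    finally show ?thesis by (simp add: M_def power_mult_distrib mult_ac)
  qed
  have "summable (\<lambda>k. (norm (F u0) * b) * ((L * b) ^ k / fact k))"
    using summable_exp_generic[of "L * b"] by (intro summable_mult) (simp add: inverse_eq_divide mult.commute)
  then have "summable M" by (simp add: M_def[abs_def])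
  from Weierstrass_m_test[where f = "\<lambda>k t. picard F u0 (Suc k) t - picard F u0 k t" and A = "{0..b}", OF M this]
  have "uniform_limit {0..b} (\<lambda>n t. u0 + (\<Sum>k<n. picard F u0 (Suc k) t - picard F u0 k t))
      (\<lambda>t. u0 + (\<Sum>k. picard F u0 (Suc k) t - picard F u0 k t)) sequentially"
    by (intro uniform_limit_add uniform_limit_const) auto
  moreover have "u0 + (\<Sum>k<n. picard F u0 (Suc k) t - picard F u0 k t) = picard F u0 n t" for n t
    using sum_lessThan_telescope[of "\<lambda>k. picard F u0 k t" n] by (simp add: picard_zero)
  ultimately show ?thesis by simp
qed

lemma has_vector_derivative_picard_limit:
  assumes lip: "L-lipschitz_on UNIV F" and b: "0 \<le> b"
    and ul: "uniform_limit {0..b} (picard F u0) y sequentially" and t: "t \<in> {0..b}"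
  shows "(y has_vector_derivative F (y t)) (at t within {0..b})"
proof -
  have cF: "continuous_on UNIV F" by (rule lipschitz_on_continuous_on[OF lip])
  have F_ul: "uniform_limit {0..b} (\<lambda>n x. F (picard F u0 n x)) (F \<circ> y) sequentially"
    by (rule uniform_limit_compose[OF ul lipschitz_on_uniformly_continuous[OF lip]]) auto
  have "\<exists>g. \<forall>x\<in>{0..b}. (\<lambda>n. picard F u0 (Suc n) x) \<longlonglongrightarrow> g x \<and>
      (g has_derivative (\<lambda>h. h *\<^sub>R F (y x))) (at x within {0..b})"
  proof (rule has_derivative_sequence[where f' = "\<lambda>n x h. h *\<^sub>R F (picard F u0 n x)"])
    show "\<And>n x. x \<in> {0..b} \<Longrightarrow>
        (picard F u0 (Suc n) has_derivative (\<lambda>h. h *\<^sub>R F (picard F u0 n x))) (at x within {0..b})"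
      using has_vector_derivative_picard[OF cF] by (simp add: has_vector_derivative_def)
    show "0 \<in> {0..b}" "(\<lambda>n. picard F u0 (Suc n) 0) \<longlonglongrightarrow> u0" using b by (simp_all add: picard_zero)
    fix e :: real assume e: "e > 0"
    show "\<forall>\<^sub>F n in sequentially. \<forall>x\<in>{0..b}. \<forall>h.
        norm (h *\<^sub>R F (picard F u0 n x) - h *\<^sub>R F (y x)) \<le> e * norm h"
      using uniform_limitD[OF F_ul e]
    proof eventually_elim
      case (elim n)
      show ?case
      proof (intro ballI allI)
        fix x h assume "x \<in> {0..b}"
        then have "norm (F (picard F u0 n x) - F (y x)) \<le> e"
          using elim by (simp add: dist_norm less_imp_le)
        then have "\<bar>h\<bar> * norm (F (picard F u0 n x) - F (y x)) \<le> \<bar>h\<bar> * e"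
          by (rule mult_left_mono) simp
        then show "norm (h *\<^sub>R F (picard F u0 n x) - h *\<^sub>R F (y x)) \<le> e * norm h"
          by (simp add: scaleR_diff_right[symmetric] mult.commute)
      qed
    qed
  qed simp
  then obtain g where g: "\<And>x. x \<in> {0..b} \<Longrightarrow> (\<lambda>n. picard F u0 (Suc n) x) \<longlonglongrightarrow> g x"
    "\<And>x. x \<in> {0..b} \<Longrightarrow> (g has_derivative (\<lambda>h. h *\<^sub>R F (y x))) (at x within {0..b})"
    by blast
  have "y x = g x" if "x \<in> {0..b}" for x
    using LIMSEQ_unique[OF LIMSEQ_Suc[OF tendsto_uniform_limitI[OF ul that]] g(1)[OF that]] .
  then have "(y has_derivative (\<lambda>h. h *\<^sub>R F (y t))) (at t within {0..b})"
    by (rule has_derivative_transform[OF t _ g(2)[OF t]])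
  then show ?thesis by (simp add: has_vector_derivative_def)
qed

lemma lipschitz_ode_solution_exists:
  fixes F :: "'a::banach \<Rightarrow> 'a"
  assumes lip: "L-lipschitz_on UNIV F"
  shows "\<exists>y. y 0 = u0 \<and> ode_solution F y"
proof (intro exI conjI)
  define y where "y t = u0 + (\<Sum>k. picard F u0 (Suc k) t - picard F u0 k t)" for t
  show "y 0 = u0" by (simp add: y_def picard_zero)
  show "ode_solution F y"
    unfolding ode_solution_def
  proof (intro allI impI)
    fix t :: real assume t: "0 \<le> t"
    have b: "0 \<le> t + 1" "t \<in> {0..t + 1}" using t by auto
    have "uniform_limit {0..t + 1} (picard F u0) y sequentially"
      unfolding y_def[abs_def] by (rule picard_uniform_limit[OF lip b(1)])
    from has_vector_derivative_picard_limit[OF lip b(1) this b(2)]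
    show "(y has_vector_derivative F (y t)) (at t within {0..})"
      using at_within_Icc_eq_Ici[OF t, of "t + 1"] by simp
  qed
qed

lemma mem_cbox_vec_iff: "u \<in> cbox (vec m) (vec M) \<longleftrightarrow> vec m \<le> u \<and> u \<le> (vec M :: real^'n)"
  by (auto simp: mem_box_cart less_eq_vec_def)

lemma norm_le_if_mem_cbox:
  fixes v :: "real^'n"
  assumes "v \<in> cbox (vec (- c)) (vec c)"
  shows "norm v \<le> real CARD('n) * c"
proof -
  have lower: "- c \<le> v $ i" and upper: "v $ i \<le> c" for i
    using assms by (simp_all add: mem_box_cart)
  have "\<bar>v $ i\<bar> \<le> c" for i
    using lower[of i] upper[of i] by (intro abs_leI) linarith+
  then have "(\<Sum>i\<in>UNIV. \<bar>v $ i\<bar>) \<le> (\<Sum>i\<in>(UNIV::'n set). c)" by (rule sum_mono)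
  then show ?thesis using norm_le_l1_cart[of v] by simp
qed

lemma clamp_vec_nth:
  fixes u :: "real^'n"
  assumes "m \<le> M"
  shows "clamp (vec m) (vec M) u $ i = max m (min M (u $ i))"
proof -
  have le: "\<forall>j\<in>Basis. vec m \<bullet> j \<le> (vec M :: real^'n) \<bullet> j"
    using assms by (auto simp: Basis_vec_def inner_axis)
  have "clamp (vec m) (vec M) u \<bullet> axis i 1 = (if u $ i < m then m else if u $ i \<le> M then u $ i else M)"
    unfolding clamp_def if_P[OF le] by (subst inner_sum_left_Basis) (simp_all add: inner_axis)
  then show ?thesis using assms by (simp add: cart_eq_inner_axis)
qed

lemma lipschitz_on_clamp: "1-lipschitz_on S (clamp a b)"
  by (rule lipschitz_onI) (simp_all add: dist_clamps_le_dist_args)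

section \<open>The operator \<open>\<Q>\<close> and the Nisio semigroup\<close>

locale nisio_setting =
  fixes P :: "(real^'n^'n) set" and f :: "real^'n^'n \<Rightarrow> real^'n" and q0 :: "real^'n^'n"
  assumes Q_matrices: "\<forall>q\<in>P. is_Q_matrix q"
    and q0: "q0 \<in> P" and f_q0: "f q0 = 0" and f_nonpos: "\<forall>q\<in>P. f q \<le> 0"
    and Qop_finite: "\<forall>u i. bdd_above ((\<lambda>q. (q *v u + f q) $ i) ` P)"
begin

lemma P_nonempty: "P \<noteq> {}"
  using q0 by auto

lemma Sq_bdd_above: "0 \<le> h \<Longrightarrow> bdd_above ((\<lambda>q. Sq q (f q) h u $ i) ` P)"
  by (rule bdd_above_component_if_le_vec[of _ _ "norm u"]) (use Sq_le_const Q_matrices f_nonpos le_vec_norm in blast)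

lemma Sq_le_Eop: "0 \<le> h \<Longrightarrow> q \<in> P \<Longrightarrow> Sq q (f q) h w \<le> Eop P f h w"
  unfolding Eop_def by (rule vsup_upper[OF Sq_bdd_above])

lemma Eop_le_const: "0 \<le> h \<Longrightarrow> w \<le> vec c \<Longrightarrow> Eop P f h w \<le> vec c"
  unfolding Eop_def by (rule vsup_le[OF P_nonempty]) (use Sq_le_const Q_matrices f_nonpos in blast)

lemma Eop_mono: "0 \<le> h \<Longrightarrow> w \<le> w' \<Longrightarrow> Eop P f h w \<le> Eop P f h w'"
  unfolding Eop_def by (rule vsup_mono[OF P_nonempty Sq_bdd_above]) (use Sq_mono Q_matrices in blast)+

lemma Eop_zero: "Eop P f 0 w = w"
  unfolding Eop_def Sq_zero by (rule vsup_const[OF P_nonempty])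

lemma Eop_minus_const_ge:
  assumes h: "0 \<le> h"
  shows "Eop P f h w - vec c \<le> Eop P f h (w - vec c)"
proof -
  have "Eop P f h w \<le> Eop P f h (w - vec c) + vec c"
    unfolding Eop_def[of P f h w]
  proof (rule vsup_le[OF P_nonempty])
    fix q assume q: "q \<in> P"
    have "Sq q (f q) h w = Sq q (f q) h (w - vec c) + vec c"
      using Sq_add_const[of q "f q" h "w - vec c" c] Q_matrices q by simp
    also have "\<dots> \<le> Eop P f h (w - vec c) + vec c" using Sq_le_Eop[OF h q] by simp
    finally show "Sq q (f q) h w \<le> Eop P f h (w - vec c) + vec c" .
  qed
  then show ?thesis by (simp add: algebra_simps)
qed

lemma Ecomp_le_const: "\<forall>h\<in>set hs. 0 \<le> h \<Longrightarrow> w \<le> vec c \<Longrightarrow> Ecomp P f hs w \<le> vec c"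
  by (induction hs) (auto intro: Eop_le_const)

lemma Epi_cases:
  assumes "\<pi> \<in> partitions"
  obtains "Epi P f \<pi> = id" "Max \<pi> = 0"
  | ts where "Epi P f \<pi> = Ecomp P f (steps ts)" "\<forall>h\<in>set (steps ts). 0 \<le> h" "sum_list (steps ts) = Max \<pi>"
proof (cases "\<pi> = {0}")
  case True
  then show ?thesis using that(1) Eop_zero by (auto simp: Epi_def fun_eq_iff)
next
  case False
  define ts where "ts = sorted_list_of_set \<pi>"
  have fin: "finite \<pi>" and sub: "\<pi> \<subseteq> {0..}" and z: "0 \<in> \<pi>" using assms by (auto simp: partitions_def)
  have st: "sorted ts" and set: "set ts = \<pi>" using fin by (auto simp: ts_def)
  have ne: "ts \<noteq> []" using set z by auto
  have "\<pi> \<noteq> {}" using z by auto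
  then have "hd ts = Min \<pi>" unfolding ts_def by (simp add: sorted_list_of_set_nonempty[OF fin])
  also have "Min \<pi> = 0" using fin sub z by (intro Min_eqI) auto
  finally have "sum_list (steps ts) = Max \<pi>"
    using sum_list_steps[OF ne] last_sorted_eq_Max[OF st ne] set by simp
  moreover have "\<forall>h\<in>set (steps ts). 0 \<le> h" using steps_nonneg[OF st] by blast
  ultimately show ?thesis using that(2) False by (simp add: Epi_def ts_def Let_def steps_def)
qed

lemma Epi_le_const:
  assumes "\<pi> \<in> partitions" "w \<le> vec c"
  shows "Epi P f \<pi> w \<le> vec c"
  using assms(1) by (cases rule: Epi_cases) (use assms(2) Ecomp_le_const in auto)

lemma Epi_bdd_above: "bdd_above ((\<lambda>\<pi>. Epi P f \<pi> u $ i) ` partitions_at t)"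
  by (rule bdd_above_component_if_le_vec) (use Epi_le_const le_vec_norm in \<open>auto simp: partitions_at_def\<close>)

lemma Epi_le_nisio: "\<pi> \<in> partitions_at t \<Longrightarrow> Epi P f \<pi> u \<le> nisio P f t u"
  unfolding nisio_def by (rule vsup_upper[OF Epi_bdd_above])

lemma Qop_component: "Qop P f u $ i = (SUP q\<in>P. (q *v u + f q) $ i)"
  by (simp add: Qop_def vsup_def)

lemma Qop_ge: "q \<in> P \<Longrightarrow> q *v u + f q \<le> Qop P f u"
  unfolding Qop_def by (rule vsup_upper) (use Qop_finite in auto)

lemma convex_on_Qop_component: "convex_on UNIV (\<lambda>u. Qop P f u $ i)"
proof (rule convex_onI)
  fix t :: real and x y :: "real^'n" assume t: "0 < t" "t < 1"
  show "Qop P f ((1 - t) *\<^sub>R x + t *\<^sub>R y) $ i \<le> (1 - t) * Qop P f x $ i + t * Qop P f y $ i"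
    unfolding Qop_component[of "(1 - t) *\<^sub>R x + t *\<^sub>R y"]
  proof (rule cSUP_least[OF P_nonempty])
    fix q assume q: "q \<in> P"
    have "(q *v ((1 - t) *\<^sub>R x + t *\<^sub>R y) + f q) $ i = (1 - t) * (q *v x + f q) $ i + t * (q *v y + f q) $ i"
      by (simp add: matrix_vector_mult_scaleR algebra_simps)
    also have "\<dots> \<le> (1 - t) * Qop P f x $ i + t * Qop P f y $ i"
      using t Qop_ge[OF q, of x] Qop_ge[OF q, of y]
      by (intro add_mono mult_left_mono) (auto simp: less_eq_vec_def)
    finally show "(q *v ((1 - t) *\<^sub>R x + t *\<^sub>R y) + f q) $ i \<le> (1 - t) * Qop P f x $ i + t * Qop P f y $ i" .
  qed
qed simp

lemma continuous_on_Qop: "continuous_on UNIV (Qop P f)"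
proof -
  have "continuous_on UNIV (\<lambda>u. \<chi> i. Qop P f u $ i)"
    by (intro continuous_on_vec_lambda convex_on_continuous[OF open_UNIV convex_on_Qop_component])
  then show ?thesis by simp
qed

lemma Qop_lipschitz_on_cball: "\<exists>L. L-lipschitz_on (cball 0 R) (Qop P f)"
proof -
  obtain L where L: "\<And>i. (L i)-lipschitz_on (cball 0 R) (\<lambda>u. Qop P f u $ i)"
    using convex_on_lipschitz_on_cball[OF convex_on_Qop_component] by metis
  have "(\<Sum>i\<in>UNIV. L i)-lipschitz_on (cball 0 R) (Qop P f)"
  proof (rule lipschitz_onI)
    fix x y :: "real^'n" assume "x \<in> cball 0 R" "y \<in> cball 0 R"
    then have "\<bar>Qop P f x $ i - Qop P f y $ i\<bar> \<le> L i * dist x y" for i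
      using lipschitz_onD[OF L] by (simp add: dist_real_def)
    then have "norm (Qop P f x - Qop P f y) \<le> (\<Sum>i\<in>UNIV. L i * dist x y)"
      by (intro order.trans[OF norm_le_l1_cart] sum_mono) simp
    then show "dist (Qop P f x) (Qop P f y) \<le> (\<Sum>i\<in>UNIV. L i) * dist x y"
      by (simp add: dist_norm sum_distrib_right)
  qed (use L lipschitz_on_nonneg in \<open>blast intro: sum_nonneg\<close>)
  then show ?thesis ..
qed

lemma Qop_nonpos_at_max:
  assumes "\<And>j. z $ j \<le> z $ i"
  shows "Qop P f z $ i \<le> 0"
  unfolding Qop_component
proof (rule cSUP_least[OF P_nonempty])
  fix q assume q: "q \<in> P"
  then have "(q *v z) $ i \<le> 0" using Q_matrix_mult_nonpos_at_max[OF _ assms] Q_matrices by blast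
  moreover have "f q $ i \<le> 0" using f_nonpos q by (simp add: less_eq_vec_def)
  ultimately show "(q *v z + f q) $ i \<le> 0" by simp
qed

lemma Qop_nonneg_at_min:
  assumes "\<And>j. z $ i \<le> z $ j"
  shows "0 \<le> Qop P f z $ i"
proof -
  have "0 \<le> (q0 *v z) $ i" using Q_matrix_mult_nonneg_at_min[OF _ assms] Q_matrices q0 by blast
  also have "(q0 *v z) $ i \<le> Qop P f z $ i" using Qop_ge[OF q0, of z] by (simp add: f_q0 less_eq_vec_def)
  finally show ?thesis .
qed

lemma Qop_nearly_attained:
  assumes K: "compact K" and e: "0 < e"
  obtains F where "finite F" "F \<subseteq> P" "\<And>w i. w \<in> K \<Longrightarrow> \<exists>q\<in>F. Qop P f w $ i - e < (q *v w + f q) $ i"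
proof -
  have "\<exists>F. finite F \<and> F \<subseteq> P \<and> (\<forall>w\<in>K. \<exists>q\<in>F. Qop P f w $ i - e < (q *v w + f q) $ i)" for i
  proof -
    define U where "U q = {w. Qop P f w $ i - e < (q *v w + f q) $ i}" for q
    have "continuous_on UNIV (\<lambda>w. Qop P f w $ i - e)"
      by (intro continuous_on_diff continuous_on_const continuous_on_component continuous_on_Qop)
    moreover have "continuous_on UNIV (\<lambda>w. (q *v w + f q) $ i)" for q
      by (intro continuous_on_component continuous_on_add continuous_on_const
          matrix_vector_mult_linear_continuous_on)
    ultimately have "open (U q)" for q
      unfolding U_def by (rule open_Collect_less)
    moreover have "K \<subseteq> (\<Union>q\<in>P. U q)"
    proof
      fix w assume "w \<in> K"
      have "Qop P f w $ i - e < (SUP q\<in>P. (q *v w + f q) $ i)" using e by (simp add: Qop_component)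
      then obtain q where "q \<in> P" "Qop P f w $ i - e < (q *v w + f q) $ i"
        using less_cSUP_iff[OF P_nonempty Qop_finite[rule_format]] by blast
      then show "w \<in> (\<Union>q\<in>P. U q)" by (auto simp: U_def)
    qed
    ultimately obtain F where F: "F \<subseteq> P" "finite F" "K \<subseteq> (\<Union>q\<in>F. U q)"
      by (rule compactE_image[OF K])
    show ?thesis
    proof (intro exI[of _ F] conjI ballI)
      fix w assume "w \<in> K"
      then obtain q where "q \<in> F" "w \<in> U q" using F(3) by blast
      then show "\<exists>q\<in>F. Qop P f w $ i - e < (q *v w + f q) $ i" by (auto simp: U_def)
    qed (use F in auto)
  qed
  then obtain F where F: "\<And>i. finite (F i) \<and> F i \<subseteq> P \<and> (\<forall>w\<in>K. \<exists>q\<in>F i. Qop P f w $ i - e < (q *v w + f q) $ i)"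
    using choice[of "\<lambda>i F. finite F \<and> F \<subseteq> P \<and> (\<forall>w\<in>K. \<exists>q\<in>F. Qop P f w $ i - e < (q *v w + f q) $ i)"]
    by blast
  show ?thesis
  proof (rule that[of "\<Union>i. F i"])
    fix w i assume "w \<in> K"
    then show "\<exists>q\<in>\<Union>i. F i. Qop P f w $ i - e < (q *v w + f q) $ i" using F[of i] by blast
  qed (use F in auto)
qed

text \<open>Clamping the argument of \<open>\<Q>\<close> to a box makes it globally Lipschitz; the box is invariant
  because \<open>\<Q>\<close> points inwards at its faces.\<close>
lemma clamped_solution_stays_in_cbox:
  assumes y: "ode_solution (\<lambda>u. Qop P f (clamp (vec m) (vec M) u)) y"
    and y0: "y 0 \<in> cbox (vec m) (vec M)" and t: "0 \<le> t"
  shows "y t \<in> cbox (vec m) (vec M)"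
proof -
  define F where "F u = Qop P f (clamp (vec m) (vec M) u)" for u
  obtain i0 :: 'n where True by simp
  have "m \<le> y 0 $ i0" "y 0 $ i0 \<le> M" using y0 by (simp_all add: mem_box_cart)
  then have mM: "m \<le> M" by linarith
  have der: "(y has_vector_derivative F (y s)) (at s within {0..t})" if "s \<in> {0..t}" for s
    using ode_solution_on_Icc[OF y that] by (simp add: F_def)
  have "0 \<le> y t - vec m"
  proof (rule nonneg_if_inward_derivative[where w = "\<lambda>s. y s - vec m" and w' = "\<lambda>s. F (y s)"])
    show "((\<lambda>s. y s - vec m) has_vector_derivative F (y s)) (at s within {0..t})" if "s \<in> {0..t}" for s
      using has_vector_derivative_diff[OF der[OF that] has_vector_derivative_const] by simp
    show "0 \<le> F (y s) $ i" if "(y s - vec m) $ i < 0" for s i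
    proof -
      have "clamp (vec m) (vec M) (y s) $ i \<le> clamp (vec m) (vec M) (y s) $ j" for j
        using that mM by (simp add: clamp_vec_nth[OF mM])
      then show ?thesis unfolding F_def by (rule Qop_nonneg_at_min)
    qed
  qed (use y0 t in \<open>simp_all add: mem_cbox_vec_iff\<close>)
  moreover have "0 \<le> vec M - y t"
  proof (rule nonneg_if_inward_derivative[where w = "\<lambda>s. vec M - y s" and w' = "\<lambda>s. - F (y s)"])
    show "((\<lambda>s. vec M - y s) has_vector_derivative - F (y s)) (at s within {0..t})" if "s \<in> {0..t}" for s
      using has_vector_derivative_diff[OF has_vector_derivative_const der[OF that]] by simp
    show "0 \<le> (- F (y s)) $ i" if "(vec M - y s) $ i < 0" for s i
    proof -
      have "clamp (vec m) (vec M) (y s) $ j \<le> clamp (vec m) (vec M) (y s) $ i" for j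
        using that mM by (simp add: clamp_vec_nth[OF mM])
      then show ?thesis unfolding F_def using Qop_nonpos_at_max by simp
    qed
  qed (use y0 t in \<open>simp_all add: mem_cbox_vec_iff\<close>)
  ultimately show ?thesis by (simp add: mem_cbox_vec_iff)
qed

lemma ode_solution_in_cbox_exists:
  assumes u0: "u0 \<in> cbox (vec m) (vec M)"
  shows "\<exists>y. y 0 = u0 \<and> ode_solution (Qop P f) y \<and> (\<forall>t\<ge>0. y t \<in> cbox (vec m) (vec M))"
proof -
  have "cbox (vec m) (vec M :: real^'n) \<noteq> {}" using u0 by blast
  then have box_ne: "\<forall>i\<in>Basis. vec m \<bullet> i \<le> (vec M :: real^'n) \<bullet> i"
    unfolding box_ne_empty(1) .
  obtain R where R: "\<forall>x\<in>cbox (vec m) (vec M :: real^'n). norm x \<le> R"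
    using bounded_cbox[unfolded bounded_iff] by blast
  have range: "range (clamp (vec m) (vec M) :: real^'n \<Rightarrow> real^'n) \<subseteq> cball 0 R"
  proof
    fix x :: "real^'n" assume "x \<in> range (clamp (vec m) (vec M))"
    then obtain u where "x = clamp (vec m) (vec M) u" by blast
    then show "x \<in> cball 0 R" using R clamp_in_interval[OF bspec[OF box_ne], of u] by simp
  qed
  obtain L where "L-lipschitz_on (cball 0 R) (Qop P f)"
    using Qop_lipschitz_on_cball by blast
  from lipschitz_on_compose2[OF lipschitz_on_clamp lipschitz_on_subset[OF this range]]
  have "(L * 1)-lipschitz_on UNIV (\<lambda>u. Qop P f (clamp (vec m) (vec M) u))" .
  then obtain y where y0: "y 0 = u0" and y: "ode_solution (\<lambda>u. Qop P f (clamp (vec m) (vec M) u)) y"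
    using lipschitz_ode_solution_exists[of "L * 1" _ u0] by blast
  have box: "y t \<in> cbox (vec m) (vec M)" if "0 \<le> t" for t
    using clamped_solution_stays_in_cbox[OF y _ that] u0 y0 by simp
  have "ode_solution (Qop P f) y"
    unfolding ode_solution_def
  proof (intro allI impI)
    fix t :: real assume t: "0 \<le> t"
    show "(y has_vector_derivative Qop P f (y t)) (at t within {0..})"
      using ode_solutionD[OF y t] clamp_cancel_cbox[OF box[OF t]] by simp
  qed
  with y0 box show ?thesis by blast
qed

subsection \<open>Comparison of solutions with the Nisio semigroup\<close>

lemma Sq_le_solution:
  assumes v: "ode_solution (Qop P f) v" and q: "q \<in> P" and r: "0 \<le> r" and h: "0 \<le> h"
  shows "Sq q (f q) h (v r) \<le> v (r + h)"
proof -
  define w where "w s = v (r + s) - Sq q (f q) s (v r)" for s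
  define w' where "w' s = Qop P f (v (r + s)) - (q *v Sq q (f q) s (v r) + f q)" for s
  have der: "(w has_vector_derivative w' s) (at s within {0..h})" if "s \<in> {0..h}" for s
  proof -
    have "((\<lambda>s. Sq q (f q) s (v r)) has_vector_derivative q *v Sq q (f q) s (v r) + f q) (at s within {0..h})"
      by (rule has_vector_derivative_within_subset[OF has_vector_derivative_Sq]) (use that in auto)
    from has_vector_derivative_diff[OF ode_solution_on_Icc[OF ode_solution_shift[OF v r] that] this]
    show ?thesis by (simp add: w_def[abs_def] w'_def)
  qed
  have super: "q *v w s \<le> w' s" if "s \<in> {0..h}" for s
    using Qop_ge[OF q, of "v (r + s)"] by (simp add: w_def w'_def matrix_vector_mult_diff_distrib le_diff_eq)
  have "0 \<le> w h"
    by (rule Metzler_supersolution_nonneg[OF Q_matrix_Metzler der _ super])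
      (use Q_matrices q h in \<open>auto simp: w_def Sq_zero\<close>)
  then show ?thesis by (simp add: w_def)
qed

lemma Ecomp_le_solution:
  assumes v: "ode_solution (Qop P f) v" and hs: "\<forall>h\<in>set hs. 0 \<le> h" and r: "0 \<le> r"
  shows "Ecomp P f hs (v r) \<le> v (r + sum_list hs)"
  using hs
proof (induction hs)
  case (Cons h hs)
  have hs: "0 \<le> sum_list hs" using Cons.prems by (intro sum_list_nonneg) auto
  have "Ecomp P f (h # hs) (v r) = Eop P f h (Ecomp P f hs (v r))" by simp
  also have "\<dots> \<le> Eop P f h (v (r + sum_list hs))"
    using Cons by (intro Eop_mono) auto
  also have "\<dots> \<le> v (r + sum_list hs + h)"
    unfolding Eop_def by (rule vsup_le[OF P_nonempty], rule Sq_le_solution[OF v]) (use Cons.prems r hs in auto)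
  finally show ?case by (simp add: algebra_simps)
qed simp

lemma nisio_le_solution:
  assumes v: "ode_solution (Qop P f) v" and t: "0 \<le> t"
  shows "nisio P f t (v 0) \<le> v t"
  unfolding nisio_def
proof (rule vsup_le)
  show "partitions_at t \<noteq> {}"
    using t by (auto simp: partitions_at_def partitions_def intro!: exI[of _ "{0, t}"])
  fix \<pi> assume "\<pi> \<in> partitions_at t"
  then have "\<pi> \<in> partitions" and "Max \<pi> = t" by (auto simp: partitions_at_def)
  from this(1) show "Epi P f \<pi> (v 0) \<le> v t"
  proof (cases rule: Epi_cases)
    case 1
    then show ?thesis using \<open>Max \<pi> = t\<close> by simp
  next
    case (2 ts)
    then show ?thesis using Ecomp_le_solution[OF v 2(2), of 0] \<open>Max \<pi> = t\<close> by simp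
  qed
qed

lemma solution_increment_le:
  assumes v: "ode_solution (Qop P f) v" and t: "0 \<le> t" and \<eta>: "0 < \<eta>"
  obtains \<delta> where "0 < \<delta>"
    "\<And>s h. s \<in> {0..t} \<Longrightarrow> 0 \<le> h \<Longrightarrow> h < \<delta> \<Longrightarrow> v (s + h) \<le> v s + h *\<^sub>R Qop P f (v s) + vec (h * \<eta>)"
proof -
  have "uniformly_continuous_on {0..t+1} (\<lambda>s. Qop P f (v s))"
    by (intro compact_uniformly_continuous continuous_on_compose2[OF continuous_on_Qop]
        continuous_on_subset[OF continuous_on_ode_solution[OF v]]) auto
  then obtain \<delta> where \<delta>: "0 < \<delta>" and
    close: "\<And>x y. x \<in> {0..t+1} \<Longrightarrow> y \<in> {0..t+1} \<Longrightarrow> dist y x < \<delta> \<Longrightarrow> dist (Qop P f (v y)) (Qop P f (v x)) < \<eta>"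
    unfolding uniformly_continuous_on_def using \<eta> by metis
  show ?thesis
  proof (rule that[of "min \<delta> 1"])
    show "0 < min \<delta> 1" using \<delta> by simp
    fix s h assume s: "s \<in> {0..t}" and h: "0 \<le> h" "h < min \<delta> 1"
    have "norm (v (s + h) - v s - (s + h - s) *\<^sub>R Qop P f (v s)) \<le> norm (s + h - s) * \<eta>"
    proof (rule vector_differentiable_bound_linearization[where S = "{s..s+h}"])
      show "(v has_vector_derivative Qop P f (v x)) (at x within {s..s+h})" if "x \<in> {s..s+h}" for x
        by (rule has_vector_derivative_within_subset[OF ode_solutionD[OF v]]) (use s that in auto)
      show "norm (Qop P f (v x) - Qop P f (v s)) \<le> \<eta>" if "x \<in> {s..s+h}" for x
        using close[of s x] s that h by (simp add: dist_norm)
    qed (use h in \<open>auto simp: closed_segment_eq_real_ivl\<close>)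
    then have "norm (v (s + h) - v s - h *\<^sub>R Qop P f (v s)) \<le> h * \<eta>" using h by simp
    then have "(v (s + h) - v s - h *\<^sub>R Qop P f (v s)) $ i \<le> h * \<eta>" for i
      using component_le_norm_cart[of "v (s + h) - v s - h *\<^sub>R Qop P f (v s)" i] by linarith
    then show "v (s + h) \<le> v s + h *\<^sub>R Qop P f (v s) + vec (h * \<eta>)"
      by (simp add: less_eq_vec_def algebra_simps)
  qed
qed

text \<open>Consistency of the scheme with \<open>\<Q>\<close>: choosing \<open>q\<close> nearly optimal in \<open>\<Q>w\<close> among finitely
  many candidates, the second-order remainder of \<open>S\<^sub>q\<close> is uniform on compact sets.\<close>
lemma Eop_ge_Taylor_on_compact:
  assumes K: "compact K" and \<eta>: "0 < \<eta>"
  obtains C where "0 \<le> C"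
    "\<And>w h. w \<in> K \<Longrightarrow> 0 \<le> h \<Longrightarrow> w + h *\<^sub>R (Qop P f w - vec \<eta>) - vec (C * h\<^sup>2) \<le> Eop P f h w"
proof -
  from compact_imp_bounded[OF K] obtain B where B: "\<forall>w\<in>K. norm w \<le> B"
    unfolding bounded_iff by blast
  obtain F where F: "finite F" "F \<subseteq> P"
    and nearly_opt: "\<And>w i. w \<in> K \<Longrightarrow> \<exists>q\<in>F. Qop P f w $ i - \<eta> < (q *v w + f q) $ i"
    using Qop_nearly_attained[OF K \<eta>] by blast
  obtain C where C: "0 \<le> C" and Taylor: "\<And>q w h. q \<in> F \<Longrightarrow> norm w \<le> B \<Longrightarrow> 0 \<le> h \<Longrightarrow>
      w + h *\<^sub>R (q *v w + f q) - vec (C * h\<^sup>2) \<le> Sq q (f q) h w"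
    using Sq_ge_Taylor_finite[where F = F and f = f and B = B] F Q_matrices by blast
  show ?thesis
  proof (rule that[OF C])
    fix w and h :: real assume w: "w \<in> K" and h: "0 \<le> h"
    have "w $ j + h * (Qop P f w $ j - \<eta>) - C * h\<^sup>2 \<le> Eop P f h w $ j" for j
    proof -
      obtain q where q: "q \<in> F" "Qop P f w $ j - \<eta> < (q *v w + f q) $ j"
        using nearly_opt[OF w] by blast
      have "h * (Qop P f w $ j - \<eta>) \<le> h * (q *v w + f q) $ j"
        using q(2) h by (intro mult_left_mono) auto
      moreover have "w $ j + h * (q *v w + f q) $ j - C * h\<^sup>2 \<le> Sq q (f q) h w $ j"
        using Taylor[OF q(1) B[rule_format, OF w] h] by (simp add: less_eq_vec_def)
      moreover have "Sq q (f q) h w $ j \<le> Eop P f h w $ j"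
        using Sq_le_Eop[OF h] q(1) F(2) by (auto simp: less_eq_vec_def)
      ultimately show ?thesis by linarith
    qed
    then show "w + h *\<^sub>R (Qop P f w - vec \<eta>) - vec (C * h\<^sup>2) \<le> Eop P f h w"
      by (simp add: less_eq_vec_def)
  qed
qed

lemma solution_step_ge_Eop:
  assumes v: "ode_solution (Qop P f) v" and t: "0 \<le> t" and \<eta>: "0 < \<eta>"
  obtains \<delta> where "0 < \<delta>"
    "\<And>s h. s \<in> {0..t} \<Longrightarrow> 0 < h \<Longrightarrow> h < \<delta> \<Longrightarrow> v (s + h) - vec (3 * h * \<eta>) \<le> Eop P f h (v s)"
proof -
  have "compact (v ` {0..t})"
    by (rule compact_continuous_image[OF continuous_on_subset[OF continuous_on_ode_solution[OF v]]]) auto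
  then obtain C where C: "0 \<le> C" and Taylor: "\<And>w h. w \<in> v ` {0..t} \<Longrightarrow> 0 \<le> h \<Longrightarrow>
      w + h *\<^sub>R (Qop P f w - vec \<eta>) - vec (C * h\<^sup>2) \<le> Eop P f h w"
    using Eop_ge_Taylor_on_compact[OF _ \<eta>] by blast
  obtain \<delta> where \<delta>: "0 < \<delta>" and increment: "\<And>s h. s \<in> {0..t} \<Longrightarrow> 0 \<le> h \<Longrightarrow> h < \<delta> \<Longrightarrow>
      v (s + h) \<le> v s + h *\<^sub>R Qop P f (v s) + vec (h * \<eta>)"
    using solution_increment_le[OF v t \<eta>] by blast
  show ?thesis
  proof (rule that[of "min \<delta> (\<eta> / (C + 1))"])
    show "0 < min \<delta> (\<eta> / (C + 1))" using \<delta> \<eta> C by simp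
    fix s h assume s: "s \<in> {0..t}" and h: "0 < h" "h < min \<delta> (\<eta> / (C + 1))"
    have "C * h \<le> \<eta>" using h C by (simp add: field_simps)
    then have remainder: "C * h\<^sup>2 \<le> h * \<eta>"
      using h by (simp add: power2_eq_square mult_right_mono mult.commute)
    have "v (s + h) $ j - 3 * h * \<eta> \<le> Eop P f h (v s) $ j" for j
    proof -
      have "v (s + h) $ j \<le> v s $ j + h * Qop P f (v s) $ j + h * \<eta>"
        using increment[OF s] h by (simp add: less_eq_vec_def)
      moreover have "v s $ j + (h * Qop P f (v s) $ j - h * \<eta>) - C * h\<^sup>2 \<le> Eop P f h (v s) $ j"
        using Taylor[OF imageI[OF s]] h by (simp add: less_eq_vec_def right_diff_distrib)
      ultimately show ?thesis using remainder by linarith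
    qed
    then show "v (s + h) - vec (3 * h * \<eta>) \<le> Eop P f h (v s)"
      by (simp add: less_eq_vec_def)
  qed
qed

lemma Ecomp_replicate_ge:
  assumes h: "0 \<le> h"
    and step: "\<And>k. k < N \<Longrightarrow> v (real (Suc k) * h) - vec c \<le> Eop P f h (v (real k * h))"
  shows "v (real N * h) - vec (real N * c) \<le> Ecomp P f (replicate N h) (v 0)"
  using step
proof (induction N)
  case (Suc N)
  have "v (real (Suc N) * h) - vec (real (Suc N) * c) = (v (real (Suc N) * h) - vec c) - vec (real N * c)"
    by (simp add: vec_eq_iff algebra_simps)
  also have "\<dots> \<le> Eop P f h (v (real N * h)) - vec (real N * c)"
    using Suc.prems[of N] by (simp add: diff_right_mono)
  also have "\<dots> \<le> Eop P f h (v (real N * h) - vec (real N * c))"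
    by (rule Eop_minus_const_ge[OF h])
  also have "\<dots> \<le> Eop P f h (Ecomp P f (replicate N h) (v 0))"
    using Suc by (intro Eop_mono[OF h]) auto
  finally show ?case by simp
qed simp

text \<open>Along the uniform partition with step \<open>h = t/N\<close> the losses \<open>3h\<eta>\<close> of the single steps add up
  to \<open>3t\<eta> = \<epsilon>\<close>.\<close>
lemma solution_minus_const_le_nisio:
  assumes v: "ode_solution (Qop P f) v" and t: "0 < t" and \<epsilon>: "0 < \<epsilon>"
  shows "v t - vec \<epsilon> \<le> nisio P f t (v 0)"
proof -
  define \<eta> where "\<eta> = \<epsilon> / (3 * t)"
  have \<eta>: "0 < \<eta>" using \<epsilon> t by (simp add: \<eta>_def)
  obtain \<delta> where \<delta>: "0 < \<delta>"
    and step: "\<And>s h. s \<in> {0..t} \<Longrightarrow> 0 < h \<Longrightarrow> h < \<delta> \<Longrightarrow> v (s + h) - vec (3 * h * \<eta>) \<le> Eop P f h (v s)"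
    using solution_step_ge_Eop[OF v less_imp_le[OF t] \<eta>] by blast
  obtain N :: nat where N: "t / \<delta> < real N" using reals_Archimedean2 by blast
  moreover have "0 < t / \<delta>" using t \<delta> by simp
  ultimately have N0: "0 < real N" by linarith
  define h where "h = t / real N"
  have h: "0 < h" "h < \<delta>" "real N * h = t"
    using N N0 t \<delta> by (auto simp: h_def field_simps)
  have "v (real N * h) - vec (real N * (3 * h * \<eta>)) \<le> Ecomp P f (replicate N h) (v 0)"
  proof (rule Ecomp_replicate_ge)
    fix k assume "k < N"
    then have "real k * h \<le> real N * h" using h by (intro mult_right_mono) auto
    then have "real k * h \<in> {0..t}" using h by simp
    from step[OF this h(1,2)]
    show "v (real (Suc k) * h) - vec (3 * h * \<eta>) \<le> Eop P f h (v (real k * h))"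
      by (simp add: algebra_simps)
  qed (use h in simp)
  also have "Ecomp P f (replicate N h) (v 0) = Epi P f ((\<lambda>k. real k * h) ` {0..N}) (v 0)"
  proof -
    have "1 \<le> N" using N0 by simp
    then show ?thesis by (simp only: Epi_uniform_partition[OF h(1)])
  qed
  also have "\<dots> \<le> nisio P f t (v 0)"
    using Epi_le_nisio[OF uniform_partition_in_partitions_at[OF h(1), of N]] h(3) by simp
  finally have "v (real N * h) - vec (real N * (3 * h * \<eta>)) \<le> nisio P f t (v 0)" .
  moreover have "real N * (3 * h * \<eta>) = \<epsilon>" using h(3) t by (simp add: \<eta>_def field_simps)
  ultimately show ?thesis using h(3) by simp
qed

lemma solution_le_nisio:
  assumes v: "ode_solution (Qop P f) v" and t: "0 \<le> t"
  shows "v t \<le> nisio P f t (v 0)"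
proof (cases "t = 0")
  case True
  have "{0} \<in> partitions_at t" using True by (simp add: partitions_at_def partitions_def)
  from Epi_le_nisio[OF this] show ?thesis using True by (simp add: Epi_def Eop_zero)
next
  case False
  with t have "0 < t" by simp
  from solution_minus_const_le_nisio[OF v this]
  have "v t $ i \<le> nisio P f t (v 0) $ i + \<epsilon>" if "0 < \<epsilon>" for i \<epsilon>
    using that by (simp add: less_eq_vec_def algebra_simps)
  then show ?thesis by (simp add: less_eq_vec_def field_le_epsilon)
qed

lemma solution_eq_nisio: "ode_solution (Qop P f) v \<Longrightarrow> 0 \<le> t \<Longrightarrow> v t = nisio P f t (v 0)"
  by (rule antisym[OF solution_le_nisio nisio_le_solution])

lemma nisio_solution:
  "\<exists>y. y 0 = u0 \<and> ode_solution (Qop P f) y \<and>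
    (\<forall>t\<ge>0. nisio P f t u0 = y t \<and> norm (y t) \<le> real CARD('n) * norm u0)"
proof -
  have "- norm u0 \<le> u0 $ i \<and> u0 $ i \<le> norm u0" for i
    using abs_le_D1[OF component_le_norm_cart[of u0 i]] abs_le_D2[OF component_le_norm_cart[of u0 i]]
    by linarith
  then have "u0 \<in> cbox (vec (- norm u0)) (vec (norm u0))" by (simp add: mem_box_cart)
  then obtain y where y0: "y 0 = u0" and y: "ode_solution (Qop P f) y"
    and box: "\<forall>t\<ge>0. y t \<in> cbox (vec (- norm u0)) (vec (norm u0))"
    using ode_solution_in_cbox_exists by blast
  have "nisio P f t u0 = y t \<and> norm (y t) \<le> real CARD('n) * norm u0" if "0 \<le> t" for t
    using solution_eq_nisio[OF y that] y0 norm_le_if_mem_cbox[OF box[rule_format, OF that]] by simp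
  with y0 y show ?thesis by blast
qed

lemma nisio_classical_solution: "classical_solution (Qop P f) u0 (\<lambda>t. nisio P f t u0)"
proof -
  obtain y where y0: "y 0 = u0" and y: "ode_solution (Qop P f) y"
    and nisio: "\<forall>t\<ge>0. nisio P f t u0 = y t \<and> norm (y t) \<le> real CARD('n) * norm u0"
    using nisio_solution[of u0] by blast
  have "ode_solution (Qop P f) (\<lambda>t. nisio P f t u0)"
    by (rule ode_solution_cong[OF y]) (use nisio in simp)
  moreover have "nisio P f 0 u0 = u0" using nisio y0 by simp
  ultimately show ?thesis by (simp add: classical_solution_iff[OF continuous_on_Qop])
qed

lemma classical_solution_eq_nisio:
  assumes "classical_solution (Qop P f) u0 v" and "0 \<le> t"
  shows "v t = nisio P f t u0"
proof -
  from assms(1) have "ode_solution (Qop P f) v" and "v 0 = u0"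
    unfolding classical_solution_iff[OF continuous_on_Qop] by simp_all
  with solution_eq_nisio[OF this(1) assms(2)] show ?thesis by simp
qed

text \<open>The solution starting in \<open>u\<close> stays in a ball of radius proportional to \<open>\<parallel>u\<parallel>\<close>, where \<open>\<Q>\<close>
  is bounded; hence it moves with bounded speed, uniformly for \<open>u\<close> in a compact set.\<close>
lemma nisio_uniformly_continuous:
  assumes K: "compact K" and e: "0 < e"
  shows "\<exists>\<delta>>0. \<forall>h. 0 < h \<and> h < \<delta> \<longrightarrow> (\<forall>u\<in>K. infnorm (nisio P f h u - u) < e)"
proof -
  from compact_imp_bounded[OF K] obtain R where R: "\<forall>u\<in>K. norm u \<le> R"
    unfolding bounded_iff by blast
  define R' where "R' = real CARD('n) * max R 0"
  have "compact (Qop P f ` cball 0 R')"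
    by (rule compact_continuous_image[OF continuous_on_subset[OF continuous_on_Qop]]) auto
  from compact_imp_bounded[OF this] obtain M where "\<forall>w\<in>Qop P f ` cball 0 R'. norm w \<le> M"
    unfolding bounded_iff by blast
  then have M: "\<And>z. norm z \<le> R' \<Longrightarrow> norm (Qop P f z) \<le> M" by simp
  have "norm (Qop P f 0) \<le> M" using M[of 0] by (simp add: R'_def)
  then have "0 \<le> M" using norm_ge_zero[of "Qop P f 0"] by linarith
  show ?thesis
  proof (intro exI[of _ "e / (M + 1)"] conjI allI impI ballI)
    show "0 < e / (M + 1)" using e \<open>0 \<le> M\<close> by simp
    fix h u assume h: "0 < h \<and> h < e / (M + 1)" and u: "u \<in> K"
    obtain y where y0: "y 0 = u" and y: "ode_solution (Qop P f) y"
      and y_nisio: "\<forall>t\<ge>0. nisio P f t u = y t \<and> norm (y t) \<le> real CARD('n) * norm u"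
      using nisio_solution[of u] by blast
    have "norm u \<le> max R 0" using R u by auto
    then have "norm (y s) \<le> R'" if "s \<in> {0..h}" for s
      using y_nisio that order.trans[OF _ mult_left_mono[of "norm u" "max R 0"]] by (auto simp: R'_def)
    then have "norm (y h - y 0) \<le> M * h"
      using M h by (intro norm_ode_solution_increment_le[OF y]) auto
    moreover have "M * h < e" using h \<open>0 \<le> M\<close> by (simp add: field_simps)
    ultimately show "infnorm (nisio P f h u - u) < e"
      using infnorm_le_norm[of "y h - u"] y_nisio y0 h by simp
  qed
qed

end

theorem mainTheorem14:
  fixes P :: "(real^'n^'n) set" and f :: "real^'n^'n \<Rightarrow> real^'n" and q0 :: "real^'n^'n"
  assumes Qmat: "\<forall>q\<in>P. is_Q_matrix q"
    and q0: "q0 \<in> P" and fq0: "f q0 = 0" and fle: "\<forall>q\<in>P. f q \<le> 0"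
    and Qfin: "\<forall>u i. bdd_above ((\<lambda>q. (q *v u + f q) $ i) ` P)"
  shows "(\<forall>h\<ge>0. \<forall>u i. bdd_above ((\<lambda>q. Sq q (f q) h u $ i) ` P))
       \<and> (\<forall>t\<ge>0. \<forall>u i. bdd_above ((\<lambda>\<pi>. Epi P f \<pi> u $ i) ` partitions_at t))
       \<and> (\<forall>u0. classical_solution (Qop P f) u0 (\<lambda>t. nisio P f t u0)
            \<and> (\<forall>v. classical_solution (Qop P f) u0 v \<longrightarrow> (\<forall>t\<ge>0. v t = nisio P f t u0)))
       \<and> (\<forall>K. compact K \<longrightarrow> (\<forall>\<epsilon>>0. \<exists>\<delta>>0. \<forall>h. 0 < h \<and> h < \<delta> \<longrightarrow>
              (\<forall>u\<in>K. infnorm (nisio P f h u - u) < \<epsilon>)))"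
proof -
  interpret nisio_setting P f q0
    by unfold_locales (use assms in auto)
  show ?thesis
    by (intro conjI allI impI Sq_bdd_above Epi_bdd_above nisio_classical_solution
        classical_solution_eq_nisio nisio_uniformly_continuous)
qed

end
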